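(* Let $1\le k<n$. Let $G$ be a simple graph on $n$ vertices (identified with its $n\times n$ binary adjacency matrix, with graph state $|G\rangle$ on $n$ qubits), and let $\Gamma$ be a $k\times n$ binary matrix. Define the linear map $\mathcal{E}_{G,\Gamma}:(\mathbb{C}^2)^{\otimes k}\to(\mathbb{C}^2)^{\otimes n}$ by $\mathcal{E}_{G,\Gamma}|x\rangle = Z^{x\Gamma}|G\rangle$ for $x\in\mathbb{F}_2^k$ (row vector, $x\Gamma\in\mathbb{F}_2^n$ computed mod 2, $Z^{c}=\bigotimes_j Z^{c_j}$); this is the linear map of the graph-like ZX-diagram with $k$ input Z-spiders, $n$ output Z-spiders, Hadamard edges between inputs and outputs given by the bi-adjacency matrix $\Gamma$ and Hadamard edges among outputs given by $G$. Let $C$ be any $k$-qubit Clifford unitary and $L_c$ any tensor product of $n$ single-qubit Clifford unitaries, and set $\mathcal{E}=L_c\,\mathcal{E}_{G,\Gamma}\,C$. Then $\mathcal{E}$ is a valid stabilizer encoder (i.e., up to a nonzero scalar it is an isometry, mapping distinct input basis states to distinct orthonormal encoded states, whose image is the $2^k$-dimensional codespace of an $[[n,k]]$ stabilizer code) if and only if $\Gamma$ has rank $k$ over $\mathbb{F}_2$.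
   Context: The graph state is $|G\rangle=\prod_{(u,v)\in E(G)}\mathrm{CZ}_{u,v}|+\rangle^{\otimes n}$. An $[[n,k]]$ stabilizer code's codespace is the common $+1$ eigenspace of an abelian subgroup of the $n$-qubit Pauli group not containing $-I$, generated by $n-k$ independent elements. The Clifford group is the normalizer of the Pauli group in the unitary group. *)

theory Defs
  imports "Jordan_Normal_Form.Schur_Decomposition" "Jordan_Normal_Form.DL_Rank" "HOL-Library.Z2"
begin

text \<open>Basis index i < 2^m corresponds to the bit string whose
j-th entry (qubit j, for j < m) is bit j of i.\<close>

definition qbit :: "nat \<Rightarrow> nat \<Rightarrow> nat" where
  "qbit i j = (if odd (i div 2 ^ j) then 1 else 0)"

definition tensor_ops :: "nat \<Rightarrow> (nat \<Rightarrow> complex mat) \<Rightarrow> complex mat" where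
  "tensor_ops m U = mat (2 ^ m) (2 ^ m) (\<lambda>(i, i'). \<Prod>j<m. U j $$ (qbit i j, qbit i' j))"

definition pauli_X :: "complex mat" where
  "pauli_X = mat_of_rows_list 2 [[0, 1], [1, 0]]"

definition pauli_Z :: "complex mat" where
  "pauli_Z = mat_of_rows_list 2 [[1, 0], [0, -1]]"

definition pauli_group :: "nat \<Rightarrow> complex mat set" where
  "pauli_group m = {(\<i> ^ c) \<cdot>\<^sub>m tensor_ops m (\<lambda>j. pauli_X ^\<^sub>m a j * pauli_Z ^\<^sub>m b j)
                    | c a b. True}"

definition unitary_mat :: "nat \<Rightarrow> complex mat \<Rightarrow> bool" where
  "unitary_mat d U \<longleftrightarrow> U \<in> carrier_mat d d \<and> mat_adjoint U * U = 1\<^sub>m d"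

definition clifford :: "nat \<Rightarrow> complex mat \<Rightarrow> bool" where
  "clifford m U \<longleftrightarrow> unitary_mat (2 ^ m) U \<and>
     (\<lambda>P. U * P * mat_adjoint U) ` pauli_group m = pauli_group m"

inductive_set gen_group :: "nat \<Rightarrow> complex mat set \<Rightarrow> complex mat set"
  for m :: nat and S :: "complex mat set" where
  gen_one: "1\<^sub>m (2 ^ m) \<in> gen_group m S"
| gen_mult: "g \<in> S \<Longrightarrow> h \<in> gen_group m S \<Longrightarrow> g * h \<in> gen_group m S"

definition stabilizer_group :: "nat \<Rightarrow> nat \<Rightarrow> complex mat set \<Rightarrow> bool" where
  "stabilizer_group m k S \<longleftrightarrow>
     (\<exists>gs. length gs = m - k \<and> set gs \<subseteq> pauli_group m \<and> S = gen_group m (set gs) \<and>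
          (\<forall>i < length gs. gs ! i \<notin> gen_group m (set gs - {gs ! i}))) \<and>
     (\<forall>g\<in>S. \<forall>h\<in>S. g * h = h * g) \<and>
     - 1\<^sub>m (2 ^ m) \<notin> S"

definition codespace :: "nat \<Rightarrow> complex mat set \<Rightarrow> complex vec set" where
  "codespace m S = {v \<in> carrier_vec (2 ^ m). \<forall>s\<in>S. s *\<^sub>v v = v}"

definition stabilizer_encoder :: "nat \<Rightarrow> nat \<Rightarrow> complex mat \<Rightarrow> bool" where
  "stabilizer_encoder n k E \<longleftrightarrow> E \<in> carrier_mat (2 ^ n) (2 ^ k) \<and>
     (\<exists>c. c \<noteq> 0 \<and> mat_adjoint E * E = c \<cdot>\<^sub>m 1\<^sub>m (2 ^ k)) \<and>
     (\<exists>S. stabilizer_group n k S \<and>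
          {E *\<^sub>v v | v. v \<in> carrier_vec (2 ^ k)} = codespace n S)"

definition simple_graph_adj :: "nat \<Rightarrow> bit mat \<Rightarrow> bool" where
  "simple_graph_adj n G \<longleftrightarrow> G \<in> carrier_mat n n \<and> transpose_mat G = G \<and> (\<forall>i<n. G $$ (i, i) = 0)"

definition graph_edges :: "nat \<Rightarrow> bit mat \<Rightarrow> (nat \<times> nat) set" where
  "graph_edges n G = {(u, v). u < v \<and> v < n \<and> G $$ (u, v) = 1}"

definition cz_gate :: "nat \<Rightarrow> nat \<Rightarrow> nat \<Rightarrow> complex mat" where
  "cz_gate m u v = mat (2 ^ m) (2 ^ m)
     (\<lambda>(i, i'). if i = i' then (if qbit i u = 1 \<and> qbit i v = 1 then -1 else 1) else 0)"

definition plus_state :: "nat \<Rightarrow> complex vec" where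
  "plus_state m = vec (2 ^ m) (\<lambda>i. 1 / complex_of_real (sqrt (2 ^ m)))"

definition graph_state :: "nat \<Rightarrow> bit mat \<Rightarrow> complex vec" where
  "graph_state n G = foldr (\<lambda>(u, v) s. cz_gate n u v *\<^sub>v s)
      [(u, v). u \<leftarrow> [0..<n], v \<leftarrow> [0..<n], (u, v) \<in> graph_edges n G] (plus_state n)"

definition bits_vec :: "nat \<Rightarrow> nat \<Rightarrow> bit vec" where
  "bits_vec k i = vec k (\<lambda>r. of_nat (qbit i r))"

definition Z_pow :: "nat \<Rightarrow> bit vec \<Rightarrow> complex mat" where
  "Z_pow n c = tensor_ops n (\<lambda>j. if c $ j = 1 then pauli_Z else 1\<^sub>m 2)"

definition graph_encoder :: "nat \<Rightarrow> nat \<Rightarrow> bit mat \<Rightarrow> bit mat \<Rightarrow> complex mat" where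
  "graph_encoder n k G \<Gamma> = mat_of_cols (2 ^ n)
     (map (\<lambda>i. Z_pow n (transpose_mat \<Gamma> *\<^sub>v bits_vec k i) *\<^sub>v graph_state n G) [0..<2 ^ k])"

end

theory Submission
  imports Defs
begin

text \<open>Write \<open>|G\<rangle> = 2^(-n/2) \<Sum>\<^sub>y (-1)^(q(y)) |y\<rangle>\<close>, where \<open>q(y)\<close> sums \<open>y\<^sub>u y\<^sub>v\<close> over the
  edges. The vectors \<open>Z\<^sup>c|G\<rangle>\<close> form an orthonormal basis, and column \<open>x\<close> of \<open>E\<^sub>G\<^sub>,\<^sub>\<Gamma>\<close> is
  \<open>Z\<^sup>x\<^sup>\<Gamma>|G\<rangle>\<close>. Hence \<open>E\<^sup>\<dagger>E\<close> is the 0/1 matrix \<open>[x\<Gamma> = x'\<Gamma>]\<close>, a multiple of the identity iff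
  \<open>x \<mapsto> x\<Gamma>\<close> is injective, i.e. iff \<open>\<Gamma>\<close> has rank \<open>k\<close>.

  Conversely, the Pauli operators \<open>P\<^sub>s = (-1)^(q(s)) X^s Z^(A s)\<close> satisfy \<open>P\<^sub>s P\<^sub>t = P\<^sub>s\<^sub>+\<^sub>t\<close> and
  \<open>P\<^sub>s Z\<^sup>c|G\<rangle> = (-1)^(s\<cdot>c) Z\<^sup>c|G\<rangle>\<close>. If \<open>\<Gamma>\<close> has rank \<open>k\<close>, an invertible \<open>k \<times> k\<close> block of its
  columns yields a basis of \<open>ker \<Gamma>\<close> of \<open>n - k\<close> vectors, each a unit vector off the block. Their
  operators \<open>P\<^sub>s\<close> are independent generators of a stabilizer group whose codespace is spanned by
  the \<open>Z\<^sup>c|G\<rangle>\<close> with \<open>c\<close> in the row space of \<open>\<Gamma>\<close>, i.e. it is the range of \<open>E\<^sub>G\<^sub>,\<^sub>\<Gamma>\<close>. Conjugating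
  by local Cliffords gives another stabilizer group, and the input Clifford \<open>C\<close> does not change
  the range.\<close>

section \<open>Bit strings and signs\<close>

lemma qbit_cases: "qbit i j = 0 \<or> qbit i j = 1"
  by (simp add: qbit_def)

lemma qbit_less_2 [simp]: "qbit i j < 2"
  by (simp add: qbit_def)

lemma qbit_0: "qbit i 0 = i mod 2"
  by (simp add: qbit_def odd_iff_mod_2_eq_one)

lemma qbit_Suc: "qbit i (Suc j) = qbit (i div 2) j"
  by (simp add: qbit_def div_mult2_eq)

lemma qbit_0_of_less_2: "i < 2 \<Longrightarrow> qbit i 0 = i"
  by (cases "i = 0") (auto simp: qbit_def)

lemma qbit_eqI:
  assumes "i < 2 ^ n" "i' < 2 ^ n" "\<forall>j<n. qbit i j = qbit i' j"
  shows "i = i'"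
  using assms
proof (induction n arbitrary: i i')
  case (Suc n)
  have "i mod 2 = i' mod 2"
    using Suc.prems(3)[rule_format, of 0] by (simp add: qbit_0)
  moreover have "i div 2 = i' div 2"
    using Suc.prems by (intro Suc.IH) (auto simp: qbit_Suc[symmetric] less_mult_imp_div_less)
  ultimately show ?case
    by (metis div_mult_mod_eq)
qed simp

lemma sum_lessThan_double: "(\<Sum>i<2 * m. g i) = (\<Sum>q<m. g (2 * q) + g (2 * q + 1))"
  for g :: "nat \<Rightarrow> 'a::comm_monoid_add"
  by (induction m) (auto simp: ac_simps)

lemma sum_qbit_prod:
  fixes f :: "nat \<Rightarrow> nat \<Rightarrow> 'a::comm_semiring_1"
  shows "(\<Sum>i<2 ^ n. \<Prod>j<n. f j (qbit i j)) = (\<Prod>j<n. f j 0 + f j 1)"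
proof (induction n arbitrary: f)
  case (Suc n)
  have split: "(\<Prod>j<Suc n. f j (qbit i j)) = f 0 (i mod 2) * (\<Prod>j<n. f (Suc j) (qbit (i div 2) j))" for i
    unfolding prod.lessThan_Suc_shift by (simp add: qbit_0 qbit_Suc)
  have "(\<Sum>i<2 ^ Suc n. \<Prod>j<Suc n. f j (qbit i j))
      = (\<Sum>q<2 ^ n. (f 0 0 + f 0 1) * (\<Prod>j<n. f (Suc j) (qbit q j)))"
    unfolding split power_Suc sum_lessThan_double by (simp add: distrib_right)
  also have "\<dots> = (f 0 0 + f 0 1) * (\<Prod>j<n. f (Suc j) 0 + f (Suc j) 1)"
    using Suc.IH[of "\<lambda>j. f (Suc j)"] by (simp add: sum_distrib_left[symmetric])
  finally show ?case
    unfolding prod.lessThan_Suc_shift by simp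
qed simp

lemma sum_pow2_less: "(\<Sum>j<n. if P j then 2 ^ j else 0) < (2::nat) ^ n"
  by (induction n) auto

lemma qbit_sum_pow2:
  assumes "j < n"
  shows "qbit (\<Sum>j<n. if P j then 2 ^ j else 0) j = (if P j then 1 else 0)"
  using assms
proof (induction n)
  case (Suc n)
  define s where "s = (\<Sum>j<n. if P j then 2 ^ j else (0::nat))"
  have s_less: "s < 2 ^ n"
    unfolding s_def by (rule sum_pow2_less)
  show ?case
  proof (cases "j < n")
    case True
    have "(2::nat) ^ n = 2 ^ j * 2 ^ (n - j)"
      using True by (simp flip: power_add)
    then have "(s + 2 ^ n) div 2 ^ j = s div 2 ^ j + 2 ^ (n - j)"
      by (simp add: div_add_self2)
    then have "qbit (s + 2 ^ n) j = qbit s j"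
      using True by (simp add: qbit_def)
    then show ?thesis
      using Suc True by (simp add: s_def)
  next
    case False
    then have "j = n"
      using Suc by simp
    moreover have "s div 2 ^ n = 0" "(s + 2 ^ n) div 2 ^ n = 1"
      using s_less by (simp_all add: div_add_self2)
    ultimately show ?thesis
      by (auto simp: qbit_def s_def)
  qed
qed simp

text \<open>Keep bit arithmetic in ring form; by default \<open>Z2\<close> rewrites \<open>+\<close> and \<open>*\<close> on bits to
  \<open>XOR\<close> and \<open>AND\<close>.\<close>

declare add_bit_eq_xor [simp del] mult_bit_eq_and [simp del]

lemma of_nat_qbit: "(of_nat (qbit i j) :: bit) = (if qbit i j = 1 then 1 else 0)"
  using qbit_cases[of i j] by auto

lemma bits_vec_carrier [simp]: "bits_vec n i \<in> carrier_vec n"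
  by (simp add: bits_vec_def)

lemma dim_bits_vec [simp]: "dim_vec (bits_vec n i) = n"
  by (simp add: bits_vec_def)

lemma bits_vec_index [simp]: "j < n \<Longrightarrow> bits_vec n i $ j = of_nat (qbit i j)"
  by (simp add: bits_vec_def)

lemma bits_vec_0: "bits_vec n 0 = 0\<^sub>v n"
  by (auto simp: bits_vec_def qbit_def)

lemma bits_vec_inj:
  assumes "i < 2 ^ n" "i' < 2 ^ n" "bits_vec n i = bits_vec n i'"
  shows "i = i'"
proof (rule qbit_eqI[OF assms(1,2)], intro allI impI)
  fix j assume "j < n"
  then have "(of_nat (qbit i j) :: bit) = of_nat (qbit i' j)"
    using arg_cong[OF assms(3), of "\<lambda>v. v $ j"] by simp
  then show "qbit i j = qbit i' j"
    using qbit_cases[of i j] qbit_cases[of i' j] by (auto simp: of_nat_qbit)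
qed

definition bits_index :: "bit vec \<Rightarrow> nat" where
  "bits_index y = (\<Sum>j<dim_vec y. if y $ j = 1 then 2 ^ j else 0)"

lemma bits_index_less: "y \<in> carrier_vec n \<Longrightarrow> bits_index y < 2 ^ n"
  by (auto simp: bits_index_def sum_pow2_less)

lemma bits_vec_bits_index: "y \<in> carrier_vec n \<Longrightarrow> bits_vec n (bits_index y) = y"
  by (intro eq_vecI) (auto simp: bits_index_def qbit_sum_pow2)

lemma bits_vec_eq_iff:
  assumes "i < 2 ^ n" "y \<in> carrier_vec n"
  shows "bits_vec n i = y \<longleftrightarrow> i = bits_index y"
  using assms bits_vec_inj[OF assms(1) bits_index_less[OF assms(2)]] bits_vec_bits_index[OF assms(2)]
  by auto

lemma sum_bits_vec_delta:
  assumes "y \<in> carrier_vec n"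
  shows "(\<Sum>i<2 ^ n. if bits_vec n i = y then F i else 0) = F (bits_index y)"
  using bits_index_less[OF assms]
  by (simp add: bits_vec_eq_iff[OF _ assms] sum.delta cong: if_cong)

lemma bit_vec_add_eq_0_iff:
  assumes "c \<in> carrier_vec n" "d \<in> carrier_vec n"
  shows "c + d = 0\<^sub>v n \<longleftrightarrow> c = (d :: bit vec)"
proof
  assume sum0: "c + d = 0\<^sub>v n"
  show "c = d"
  proof (rule eq_vecI)
    fix i assume "i < dim_vec d"
    then have "c $ i + d $ i = 0"
      using arg_cong[OF sum0, of "\<lambda>v. v $ i"] assms by simp
    then show "c $ i = d $ i"
      by (cases "c $ i"; cases "d $ i") auto
  qed (use assms in auto)
qed (use assms in \<open>auto intro!: eq_vecI\<close>)

lemma bit_vec_eq_add_iff: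
  assumes "a \<in> carrier_vec n" "b \<in> carrier_vec n" "s \<in> carrier_vec n"
  shows "a = b + s \<longleftrightarrow> b = a + (s :: bit vec)"
  using assms by (auto intro!: eq_vecI simp: add.assoc)

lemma scalar_prod_bits_vec:
  "d \<in> carrier_vec n \<Longrightarrow> d \<bullet> bits_vec n i = (\<Sum>j<n. d $ j * of_nat (qbit i j))"
  by (simp add: scalar_prod_def atLeast0LessThan)

definition bit_sign :: "bit \<Rightarrow> complex" where
  "bit_sign b = (if b = 1 then -1 else 1)"

lemma bit_sign_0 [simp]: "bit_sign 0 = 1" and bit_sign_1 [simp]: "bit_sign 1 = -1"
  by (auto simp: bit_sign_def)

lemma bit_sign_add: "bit_sign (a + b) = bit_sign a * bit_sign b"
  by (cases a; cases b) (auto simp: bit_sign_def)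

lemma bit_sign_square [simp]: "bit_sign a * bit_sign a = 1"
  by (cases a) (auto simp: bit_sign_def)

lemma cnj_bit_sign [simp]: "cnj (bit_sign a) = bit_sign a"
  by (cases a) (auto simp: bit_sign_def)

lemma bit_sign_nonzero [simp]: "bit_sign a \<noteq> 0"
  by (cases a) (auto simp: bit_sign_def)

lemma bit_sign_sum: "bit_sign (\<Sum>j\<in>A. f j) = (\<Prod>j\<in>A. bit_sign (f j))"
  by (induction A rule: infinite_finite_induct) (auto simp: bit_sign_add)

lemma sum_bit_sign_scalar_prod:
  assumes d: "d \<in> carrier_vec n"
  shows "(\<Sum>i<2 ^ n. bit_sign (d \<bullet> bits_vec n i)) = (if d = 0\<^sub>v n then 2 ^ n else 0)"
proof -
  have "(\<Sum>i<2 ^ n. bit_sign (d \<bullet> bits_vec n i)) = (\<Prod>j<n. bit_sign (d $ j * 0) + bit_sign (d $ j * 1))"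
    using sum_qbit_prod[of "\<lambda>j q. bit_sign (d $ j * of_nat q)" n]
    by (simp add: scalar_prod_bits_vec[OF d] bit_sign_sum)
  also have "\<dots> = (\<Prod>j<n. if d $ j = 1 then 0 else 2)"
    by (rule prod.cong) (auto simp: bit_sign_def)
  also have "\<dots> = (if d = 0\<^sub>v n then 2 ^ n else 0)"
  proof (cases "d = 0\<^sub>v n")
    case False
    then obtain j where "j < n" "d $ j \<noteq> 0"
      using d by (metis carrier_vecD eq_vecI index_zero_vec)
    then show ?thesis
      using False by (auto intro!: prod_zero bexI[of _ j])
  qed simp
  finally show ?thesis .
qed

section \<open>Rank and pivot columns\<close>

lemma (in vec_space) rank_basis_of_cols:
  assumes A: "A \<in> carrier_mat n nc"
  obtains bs where "set bs \<subseteq> set (cols A)" "distinct bs" "length bs = rank A" "lin_indpt (set bs)"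
    "\<And>m. m < nc \<Longrightarrow> col A m \<in> span (set bs)"
proof -
  obtain S where max: "maximal S (\<lambda>T. T \<subseteq> set (cols A) \<and> lin_indpt T)"
    using maximal_exists[of "\<lambda>T. T \<subseteq> set (cols A) \<and> lin_indpt T" "card (set (cols A))" "{}"]
    by (meson List.finite_set card_mono empty_iff empty_subsetI finite_lin_indpt2 rev_finite_subset)
  have SA: "S \<subseteq> set (cols A)" and li: "lin_indpt S"
    using max unfolding maximal_def by auto
  have Sc: "S \<subseteq> carrier_vec n"
    using SA A cols_dim by blast
  obtain bs where bs: "distinct bs" "set bs = S"
    using finite_distinct_list[OF finite_subset[OF SA]] by blast
  have "col A m \<in> span S" if m: "m < nc" for m
  proof (cases "col A m \<in> S")
    case False
    have "col A m \<in> set (cols A)"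
      using m A by (simp add: cols_def)
    then have "\<not> lin_indpt (S \<union> {col A m})"
      using max SA False unfolding maximal_def by blast
    then show ?thesis
      using lin_dep_iff_in_span[OF Sc li _ False] m A by simp
  qed (use in_own_span[OF Sc] in blast)
  then show ?thesis
    using that[of bs] bs SA li rank_card_indpt[OF A max] distinct_card by fastforce
qed

lemma (in vec_space) mat_of_cols_mult_vec_eq_0_imp:
  assumes bs: "set bs \<subseteq> carrier_vec n" "distinct bs" "lin_indpt (set bs)"
    and v: "v \<in> carrier_vec (length bs)" "mat_of_cols n bs *\<^sub>v v = 0\<^sub>v n"
  shows "v = 0\<^sub>v (length bs)"
proof (rule ccontr)
  assume "v \<noteq> 0\<^sub>v (length bs)"
  then have "lin_dep (set (cols (mat_of_cols n bs)))"
    using lin_depI[OF mat_of_cols_carrier(1) v(1) _ v(2)] bs by (simp add: cols_mat_of_cols)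
  then show False
    using bs by (simp add: cols_mat_of_cols)
qed

lemma (in vec_space) span_imp_mat_of_cols_mult:
  assumes bs: "set bs \<subseteq> carrier_vec n" "distinct bs" and u: "u \<in> span (set bs)"
  obtains w where "w \<in> carrier_vec (length bs)" "u = mat_of_cols n bs *\<^sub>v w"
proof -
  obtain a where "lincomb a (set bs) = u"
    using finite_in_span[OF _ bs(1) u] by auto
  moreover have "mat_of_cols n bs *\<^sub>v vec (length bs) (\<lambda>i. a (col (mat_of_cols n bs) i)) = lincomb a (set bs)"
    using mat_mult_eq_lincomb[OF mat_of_cols_carrier(1)] bs by (simp add: cols_mat_of_cols)
  ultimately show ?thesis
    using that by (metis vec_carrier)
qed

text \<open>Padding \<open>A\<close> with zero rows gives a singular square matrix with the same kernel.\<close>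

lemma wide_mat_kernel:
  fixes A :: "'a::field mat"
  assumes A: "A \<in> carrier_mat m p" and mp: "m < p"
  obtains v where "v \<in> carrier_vec p" "v \<noteq> 0\<^sub>v p" "A *\<^sub>v v = 0\<^sub>v m"
proof -
  define A' where "A' = mat\<^sub>r p p (\<lambda>i. if i = m then 0\<^sub>v p else if i < m then row A i else 0\<^sub>v p)"
  have "det A' = 0"
    unfolding A'_def by (rule det_row_0[OF mp]) (use A in auto)
  then obtain v where v: "v \<in> carrier_vec p" "v \<noteq> 0\<^sub>v p" "A' *\<^sub>v v = 0\<^sub>v p"
    using det_0_iff_vec_prod_zero_field[of A' p] unfolding A'_def by auto
  have "A *\<^sub>v v = 0\<^sub>v m"
  proof (rule eq_vecI)
    fix i assume "i < dim_vec (0\<^sub>v m)"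
    then have "i < m" by simp
    moreover have "(A' *\<^sub>v v) $ i = 0"
      using v(3) \<open>i < m\<close> mp by simp
    ultimately show "(A *\<^sub>v v) $ i = 0\<^sub>v m $ i"
      using A mp unfolding A'_def by (simp add: row_mat_of_row_fun)
  qed (use A in simp)
  then show ?thesis
    using that v by blast
qed

lemma (in vec_space) rank_le_nr:
  assumes A: "A \<in> carrier_mat n nc"
  shows "rank A \<le> n"
proof (rule ccontr)
  obtain bs where bs: "set bs \<subseteq> set (cols A)" "distinct bs" "length bs = rank A" "lin_indpt (set bs)"
    using rank_basis_of_cols[OF A] by metis
  have carrier: "set bs \<subseteq> carrier_vec n"
    using bs(1) A cols_dim by blast
  assume "\<not> rank A \<le> n"
  then have "n < length bs"
    using bs(3) by simp
  then obtain v where "v \<in> carrier_vec (length bs)" "v \<noteq> 0\<^sub>v (length bs)" "mat_of_cols n bs *\<^sub>v v = 0\<^sub>v n"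
    by (rule wide_mat_kernel[OF mat_of_cols_carrier(1)])
  then show False
    using mat_of_cols_mult_vec_eq_0_imp[OF carrier bs(2,4)] by blast
qed

definition pivot_block :: "'a mat \<Rightarrow> nat \<Rightarrow> (nat \<Rightarrow> nat) \<Rightarrow> 'a mat" where
  "pivot_block \<Gamma> k piv = mat k k (\<lambda>(r, a). \<Gamma> $$ (r, piv a))"

locale pivot_cols =
  fixes \<Gamma> :: "'a::field mat" and k n :: nat and piv :: "nat \<Rightarrow> nat" and Binv :: "'a mat"
  assumes carrier: "\<Gamma> \<in> carrier_mat k n"
    and piv_less: "\<And>a. a < k \<Longrightarrow> piv a < n"
    and piv_inj: "inj_on piv {..<k}"
    and inv_carrier: "Binv \<in> carrier_mat k k"
    and inv_left: "Binv * pivot_block \<Gamma> k piv = 1\<^sub>m k"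
    and inv_right: "pivot_block \<Gamma> k piv * Binv = 1\<^sub>m k"

lemma full_rank_imp_pivot_cols:
  fixes \<Gamma> :: "'a::field mat"
  assumes \<Gamma>: "\<Gamma> \<in> carrier_mat k n" and rk: "vec_space.rank k \<Gamma> = k"
  obtains piv Binv where "pivot_cols \<Gamma> k n piv Binv"
proof -
  interpret vec_space "TYPE('a)" k .
  obtain bs where bs: "set bs \<subseteq> set (cols \<Gamma>)" "distinct bs" "length bs = k" "lin_indpt (set bs)"
    using rank_basis_of_cols[OF \<Gamma>] rk by metis
  have carrier: "set bs \<subseteq> carrier_vec k"
    using bs(1) \<Gamma> cols_dim by blast
  have "\<exists>m<n. bs ! a = col \<Gamma> m" if "a < k" for a
    using that bs \<Gamma> by (force simp: in_set_conv_nth)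
  then obtain piv where piv: "\<And>a. a < k \<Longrightarrow> piv a < n \<and> bs ! a = col \<Gamma> (piv a)"
    by metis
  have "inj_on piv {..<k}"
    using piv bs(2,3) by (intro inj_onI) (metis lessThan_iff nth_eq_iff_index_eq)
  define B where "B = mat_of_cols k bs"
  have Bk: "B \<in> carrier_mat k k"
    unfolding B_def using mat_of_cols_carrier[of k bs] bs(3) by simp
  have B_eq: "B = pivot_block \<Gamma> k piv"
    unfolding B_def pivot_block_def using piv \<Gamma> bs(3) by (intro eq_matI) (auto simp: mat_of_cols_index)
  have "det B \<noteq> 0"
    using det_0_iff_vec_prod_zero_field[OF Bk] mat_of_cols_mult_vec_eq_0_imp[OF carrier bs(2,4)] bs(3)
    unfolding B_def by auto
  then obtain Binv where "Binv \<in> carrier_mat k k" "Binv * B = 1\<^sub>m k" "B * Binv = 1\<^sub>m k"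
    using det_non_zero_imp_unit[OF Bk, of "()"] unfolding Units_def ring_mat_def by auto
  then show ?thesis
    using that piv \<open>inj_on piv {..<k}\<close> \<Gamma> B_eq by (auto simp: pivot_cols_def)
qed

lemma rank_deficient_imp_left_kernel:
  fixes \<Gamma> :: "'a::field mat"
  assumes \<Gamma>: "\<Gamma> \<in> carrier_mat k n" and rk: "vec_space.rank k \<Gamma> \<noteq> k"
  obtains x where "x \<in> carrier_vec k" "x \<noteq> 0\<^sub>v k" "transpose_mat \<Gamma> *\<^sub>v x = 0\<^sub>v n"
proof -
  interpret vec_space "TYPE('a)" k .
  obtain bs where bs: "set bs \<subseteq> set (cols \<Gamma>)" "distinct bs" "length bs = rank \<Gamma>"
    and span: "\<And>m. m < n \<Longrightarrow> col \<Gamma> m \<in> span (set bs)"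
    using rank_basis_of_cols[OF \<Gamma>] by metis
  have carrier: "set bs \<subseteq> carrier_vec k"
    using bs(1) \<Gamma> cols_dim by blast
  define B where "B = mat_of_cols k bs"
  have Bc: "B \<in> carrier_mat k (rank \<Gamma>)"
    unfolding B_def using mat_of_cols_carrier[of k bs] bs(3) by simp
  obtain x where x: "x \<in> carrier_vec k" "x \<noteq> 0\<^sub>v k" "transpose_mat B *\<^sub>v x = 0\<^sub>v (rank \<Gamma>)"
    using wide_mat_kernel[of "transpose_mat B" "rank \<Gamma>" k] Bc rk rank_le_nr[OF \<Gamma>] by auto
  have "(transpose_mat \<Gamma> *\<^sub>v x) $ m = 0" if m: "m < n" for m
  proof -
    obtain w where w: "w \<in> carrier_vec (rank \<Gamma>)" "col \<Gamma> m = B *\<^sub>v w"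
      using span_imp_mat_of_cols_mult[OF carrier bs(2) span[OF m]] bs(3) unfolding B_def by metis
    have "(transpose_mat \<Gamma> *\<^sub>v x) $ m = x \<bullet> (B *\<^sub>v w)"
      using m \<Gamma> w Bc x by (simp add: comm_scalar_prod[of _ k])
    also have "\<dots> = (transpose_mat B *\<^sub>v x) \<bullet> w"
      using transpose_vec_mult_scalar[OF Bc w(1) x(1)] by simp
    finally show ?thesis
      using x(3) w(1) by simp
  qed
  then have "transpose_mat \<Gamma> *\<^sub>v x = 0\<^sub>v n"
    using \<Gamma> by (intro eq_vecI) auto
  then show ?thesis
    using that x by blast
qed

context pivot_cols
begin

lemma pivot_block_carrier: "pivot_block \<Gamma> k piv \<in> carrier_mat k k"
  by (simp add: pivot_block_def)

lemma col_pivot_block: "a < k \<Longrightarrow> col (pivot_block \<Gamma> k piv) a = col \<Gamma> (piv a)"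
  using carrier piv_less by (intro eq_vecI) (auto simp: pivot_block_def)

lemma transpose_mult_vec_eq_0_iff:
  assumes x: "x \<in> carrier_vec k"
  shows "transpose_mat \<Gamma> *\<^sub>v x = 0\<^sub>v n \<longleftrightarrow> x = 0\<^sub>v k"
proof
  assume kernel: "transpose_mat \<Gamma> *\<^sub>v x = 0\<^sub>v n"
  let ?B = "pivot_block \<Gamma> k piv"
  have B: "?B \<in> carrier_mat k k"
    by (rule pivot_block_carrier)
  have "transpose_mat ?B *\<^sub>v x = 0\<^sub>v k"
  proof (rule eq_vecI)
    fix a assume "a < dim_vec (0\<^sub>v k)"
    then have a: "a < k" by simp
    have "(transpose_mat ?B *\<^sub>v x) $ a = col \<Gamma> (piv a) \<bullet> x"
      using a B by (simp add: col_pivot_block)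
    also have "\<dots> = (transpose_mat \<Gamma> *\<^sub>v x) $ piv a"
      using piv_less[OF a] carrier by simp
    finally show "(transpose_mat ?B *\<^sub>v x) $ a = 0\<^sub>v k $ a"
      using kernel a piv_less[OF a] by simp
  qed (use B in simp)
  then have "(transpose_mat Binv * transpose_mat ?B) *\<^sub>v x = 0\<^sub>v k"
    using B inv_carrier x by auto
  moreover have "transpose_mat Binv * transpose_mat ?B = 1\<^sub>m k"
    using transpose_mult[OF B inv_carrier] inv_right by simp
  ultimately show "x = 0\<^sub>v k"
    using x by simp
qed (use carrier in \<open>auto intro!: eq_vecI\<close>)

definition free_cols :: "nat list" where
  "free_cols = filter (\<lambda>m. m \<notin> piv ` {..<k}) [0..<n]"

lemma set_free_cols: "set free_cols = {m. m < n \<and> m \<notin> piv ` {..<k}}"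
  by (auto simp: free_cols_def)

lemma distinct_free_cols: "distinct free_cols"
  by (simp add: free_cols_def)

lemma length_free_cols: "length free_cols = n - k"
proof -
  have "length free_cols = card (set free_cols)"
    by (rule distinct_card[OF distinct_free_cols, symmetric])
  also have "set free_cols = {..<n} - piv ` {..<k}"
    by (auto simp: set_free_cols)
  also have "card \<dots> = n - card (piv ` {..<k})"
    using piv_less by (subst card_Diff_subset) auto
  also have "card (piv ` {..<k}) = k"
    using card_image[OF piv_inj] by simp
  finally show ?thesis .
qed

text \<open>The vector of \<open>ker \<Gamma>\<close> that agrees with \<open>e\<^sub>m\<close> off the pivot columns; its pivot
  coordinates solve \<open>\<Gamma> v = 0\<close> via the inverse of the pivot block.\<close>

definition kernel_vec :: "nat \<Rightarrow> 'a vec" where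
  "kernel_vec m = vec n (\<lambda>t. (if t = m then 1 else 0) -
      (\<Sum>a<k. if piv a = t then (Binv *\<^sub>v col \<Gamma> m) $ a else 0))"

lemma kernel_vec_carrier [simp]: "kernel_vec m \<in> carrier_vec n"
  by (simp add: kernel_vec_def)

lemma sum_mult_kernel_vec:
  assumes m: "m < n"
  shows "(\<Sum>t<n. f t * kernel_vec m $ t) = f m - (\<Sum>a<k. f (piv a) * (Binv *\<^sub>v col \<Gamma> m) $ a)"
proof -
  define w where "w = Binv *\<^sub>v col \<Gamma> m"
  have "(\<Sum>t<n. f t * kernel_vec m $ t)
      = (\<Sum>t<n. if t = m then f t else 0) - (\<Sum>t<n. \<Sum>a<k. if piv a = t then f t * w $ a else 0)"
    by (simp add: kernel_vec_def w_def right_diff_distrib sum_subtractf sum_distrib_left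
        if_distrib[of "\<lambda>x. f _ * x"] cong: if_cong)
  also have "(\<Sum>t<n. \<Sum>a<k. if piv a = t then f t * w $ a else 0) = (\<Sum>a<k. f (piv a) * w $ a)"
    using piv_less by (subst sum.swap) (simp add: sum.delta)
  finally show ?thesis
    using m by (simp add: w_def)
qed

lemma kernel_vec_in_kernel:
  assumes m: "m < n"
  shows "\<Gamma> *\<^sub>v kernel_vec m = 0\<^sub>v k"
proof (rule eq_vecI)
  fix r assume "r < dim_vec (0\<^sub>v k)"
  then have r: "r < k" by simp
  have col_m: "col \<Gamma> m \<in> carrier_vec k"
    using carrier by (simp add: carrier_vecI)
  have "(\<Sum>a<k. \<Gamma> $$ (r, piv a) * (Binv *\<^sub>v col \<Gamma> m) $ a)
      = ((pivot_block \<Gamma> k piv * Binv) *\<^sub>v col \<Gamma> m) $ r"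
    using r inv_carrier col_m pivot_block_carrier
    by (simp add: assoc_mult_mat_vec[of _ k k _ k] pivot_block_def scalar_prod_def atLeast0LessThan)
  also have "\<dots> = \<Gamma> $$ (r, m)"
    using inv_right col_m r m carrier by simp
  finally have "(\<Sum>t<n. \<Gamma> $$ (r, t) * kernel_vec m $ t) = 0"
    using sum_mult_kernel_vec[OF m, of "\<lambda>t. \<Gamma> $$ (r, t)"] by simp
  moreover have "(\<Gamma> *\<^sub>v kernel_vec m) $ r = (\<Sum>t<n. \<Gamma> $$ (r, t) * kernel_vec m $ t)"
    using r carrier by (auto simp: scalar_prod_def atLeast0LessThan intro!: sum.cong)
  ultimately show "(\<Gamma> *\<^sub>v kernel_vec m) $ r = 0\<^sub>v k $ r"
    using r by simp
qed (use carrier in simp)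

lemma kernel_vec_free_index:
  assumes "m' \<in> set free_cols"
  shows "kernel_vec m $ m' = (if m' = m then 1 else 0)"
  using assms by (auto simp: kernel_vec_def set_free_cols intro!: sum.neutral)

definition row_space_coeffs :: "'a vec \<Rightarrow> 'a vec" where
  "row_space_coeffs c = transpose_mat Binv *\<^sub>v vec k (\<lambda>a. c $ piv a)"

lemma row_space_coeffs_carrier: "row_space_coeffs c \<in> carrier_vec k"
  using inv_carrier by (simp add: row_space_coeffs_def)

lemma col_pivot_scalar_prod_row_space_coeffs:
  assumes b: "b < k"
  shows "col \<Gamma> (piv b) \<bullet> row_space_coeffs c = c $ piv b"
proof -
  let ?B = "pivot_block \<Gamma> k piv"
  have "col \<Gamma> (piv b) \<bullet> row_space_coeffs c = (transpose_mat ?B *\<^sub>v row_space_coeffs c) $ b"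
    using b col_pivot_block pivot_block_carrier by simp
  also have "transpose_mat ?B *\<^sub>v row_space_coeffs c = transpose_mat (Binv * ?B) *\<^sub>v vec k (\<lambda>a. c $ piv a)"
    unfolding row_space_coeffs_def using pivot_block_carrier inv_carrier
    by (simp add: transpose_mult assoc_mult_mat_vec[of _ k k _ k])
  finally show ?thesis
    using inv_left b by simp
qed

lemma col_scalar_prod_row_space_coeffs:
  assumes c: "c \<in> carrier_vec n" and t: "t < n"
  shows "col \<Gamma> t \<bullet> row_space_coeffs c = c $ t - kernel_vec t \<bullet> c"
proof -
  define c_piv where "c_piv = vec k (\<lambda>a. c $ piv a)"
  define w where "w = Binv *\<^sub>v col \<Gamma> t"
  have col_t: "col \<Gamma> t \<in> carrier_vec k"
    using t carrier by simp
  have c_piv: "c_piv \<in> carrier_vec k" and w: "w \<in> carrier_vec k"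
    unfolding c_piv_def w_def using inv_carrier by (simp_all add: carrier_vecI)
  have "kernel_vec t \<bullet> c = (\<Sum>t'<n. c $ t' * kernel_vec t $ t')"
    using c by (simp add: scalar_prod_def atLeast0LessThan mult.commute)
  also have "\<dots> = c $ t - w \<bullet> c_piv"
    using sum_mult_kernel_vec[OF t] w by (simp add: w_def c_piv_def scalar_prod_def atLeast0LessThan mult.commute)
  finally have "w \<bullet> c_piv = c $ t - kernel_vec t \<bullet> c"
    by simp
  moreover have "w \<bullet> c_piv = row_space_coeffs c \<bullet> col \<Gamma> t"
    unfolding row_space_coeffs_def c_piv_def[symmetric] w_def
    using transpose_vec_mult_scalar[OF inv_carrier col_t c_piv] comm_scalar_prod[OF c_piv w] by (simp add: w_def)
  ultimately show ?thesis
    using comm_scalar_prod[OF row_space_coeffs_carrier col_t] by simp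
qed

text \<open>The kernel vectors span \<open>ker \<Gamma>\<close>, so their annihilator is the row space of \<open>\<Gamma>\<close>.\<close>

lemma orthogonal_kernel_vecs_imp_row_space:
  assumes c: "c \<in> carrier_vec n"
    and orth: "\<And>m. m \<in> set free_cols \<Longrightarrow> kernel_vec m \<bullet> c = 0"
  obtains x where "x \<in> carrier_vec k" "c = transpose_mat \<Gamma> *\<^sub>v x"
proof -
  have "c $ t = col \<Gamma> t \<bullet> row_space_coeffs c" if t: "t < n" for t
  proof (cases "t \<in> piv ` {..<k}")
    case True
    then show ?thesis
      using col_pivot_scalar_prod_row_space_coeffs by auto
  next
    case False
    then show ?thesis
      using col_scalar_prod_row_space_coeffs[OF c t] orth[of t] t by (simp add: set_free_cols)
  qed
  then have "c = transpose_mat \<Gamma> *\<^sub>v row_space_coeffs c"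
    using c carrier by (intro eq_vecI) auto
  then show ?thesis
    using that row_space_coeffs_carrier by blast
qed

end

section \<open>Tensor products of single-qubit operators\<close>

lemma tensor_ops_index:
  "i < 2 ^ n \<Longrightarrow> i' < 2 ^ n \<Longrightarrow> tensor_ops n U $$ (i, i') = (\<Prod>j<n. U j $$ (qbit i j, qbit i' j))"
  by (simp add: tensor_ops_def)

lemma tensor_ops_carrier [simp]: "tensor_ops n U \<in> carrier_mat (2 ^ n) (2 ^ n)"
  by (simp add: tensor_ops_def)

lemma dim_tensor_ops [simp]: "dim_row (tensor_ops n U) = 2 ^ n" "dim_col (tensor_ops n U) = 2 ^ n"
  by (simp_all add: tensor_ops_def)

lemma tensor_ops_cong: "(\<And>j. j < n \<Longrightarrow> U j = V j) \<Longrightarrow> tensor_ops n U = tensor_ops n V"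
  unfolding tensor_ops_def by (intro eq_matI) auto

lemma index_mult_mat_sum:
  assumes "A \<in> carrier_mat r m" "B \<in> carrier_mat m c" "i < r" "k < c"
  shows "(A * B) $$ (i, k) = (\<Sum>l<m. A $$ (i, l) * B $$ (l, k))"
  using assms by (simp add: scalar_prod_def atLeast0LessThan)

lemma tensor_ops_mult:
  assumes "\<And>j. j < n \<Longrightarrow> U j \<in> carrier_mat 2 2" "\<And>j. j < n \<Longrightarrow> V j \<in> carrier_mat 2 2"
  shows "tensor_ops n U * tensor_ops n V = tensor_ops n (\<lambda>j. U j * V j)"
proof (rule eq_matI)
  fix i i'' assume "i < dim_row (tensor_ops n (\<lambda>j. U j * V j))" "i'' < dim_col (tensor_ops n (\<lambda>j. U j * V j))"
  then have i: "i < 2 ^ n" and i'': "i'' < 2 ^ n" by auto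
  have "(tensor_ops n U * tensor_ops n V) $$ (i, i'') =
      (\<Sum>i'<2 ^ n. tensor_ops n U $$ (i, i') * tensor_ops n V $$ (i', i''))"
    by (rule index_mult_mat_sum[OF tensor_ops_carrier tensor_ops_carrier i i''])
  also have "\<dots> = (\<Sum>i'<2 ^ n. \<Prod>j<n. U j $$ (qbit i j, qbit i' j) * V j $$ (qbit i' j, qbit i'' j))"
    using i i'' by (simp add: tensor_ops_index prod.distrib)
  also have "\<dots> = (\<Prod>j<n. U j $$ (qbit i j, 0) * V j $$ (0, qbit i'' j) + U j $$ (qbit i j, 1) * V j $$ (1, qbit i'' j))"
    by (rule sum_qbit_prod[where f = "\<lambda>j q. U j $$ (qbit i j, q) * V j $$ (q, qbit i'' j)"])
  also have "\<dots> = (\<Prod>j<n. (U j * V j) $$ (qbit i j, qbit i'' j))"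
  proof (rule prod.cong[OF refl])
    fix j assume "j \<in> {..<n}"
    then have j: "j < n" by simp
    show "U j $$ (qbit i j, 0) * V j $$ (0, qbit i'' j) + U j $$ (qbit i j, 1) * V j $$ (1, qbit i'' j)
        = (U j * V j) $$ (qbit i j, qbit i'' j)"
      using index_mult_mat_sum[OF assms(1)[OF j] assms(2)[OF j] qbit_less_2 qbit_less_2]
      by (simp add: numeral_2_eq_2 lessThan_Suc)
  qed
  also have "\<dots> = tensor_ops n (\<lambda>j. U j * V j) $$ (i, i'')"
    using i i'' by (simp add: tensor_ops_index)
  finally show "(tensor_ops n U * tensor_ops n V) $$ (i, i'') = tensor_ops n (\<lambda>j. U j * V j) $$ (i, i'')" .
qed auto

lemma mat_adjoint_carrier [simp]: "A \<in> carrier_mat r c \<Longrightarrow> mat_adjoint A \<in> carrier_mat c r"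
  by (intro carrier_matI) (auto simp: mat_adjoint_def)

lemma dim_mat_adjoint [simp]: "dim_row (mat_adjoint A) = dim_col A" "dim_col (mat_adjoint A) = dim_row A"
  by (simp_all add: mat_adjoint_def)

lemma index_mat_adjoint:
  "i < dim_col A \<Longrightarrow> j < dim_row A \<Longrightarrow> mat_adjoint A $$ (i, j) = cnj (A $$ (j, i))"
  by (simp add: mat_adjoint_def mat_of_rows_def)

lemma mat_adjoint_mult:
  fixes A B :: "complex mat"
  assumes A: "A \<in> carrier_mat r m" and B: "B \<in> carrier_mat m c"
  shows "mat_adjoint (A * B) = mat_adjoint B * mat_adjoint A"
proof (rule eq_matI)
  fix i j assume "i < dim_row (mat_adjoint B * mat_adjoint A)" "j < dim_col (mat_adjoint B * mat_adjoint A)"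
  then have i: "i < c" and j: "j < r" using A B by auto
  have "mat_adjoint (A * B) $$ (i, j) = cnj ((A * B) $$ (j, i))"
    using A B i j by (simp add: index_mat_adjoint)
  also have "\<dots> = (\<Sum>l<m. cnj (A $$ (j, l)) * cnj (B $$ (l, i)))"
    using index_mult_mat_sum[OF A B j i] by simp
  also have "\<dots> = (\<Sum>l<m. mat_adjoint B $$ (i, l) * mat_adjoint A $$ (l, j))"
    using A B i j by (intro sum.cong refl) (simp add: index_mat_adjoint mult.commute)
  also have "\<dots> = (mat_adjoint B * mat_adjoint A) $$ (i, j)"
    using index_mult_mat_sum[of "mat_adjoint B" c m "mat_adjoint A" r i j] A B i j by simp
  finally show "mat_adjoint (A * B) $$ (i, j) = (mat_adjoint B * mat_adjoint A) $$ (i, j)" .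
qed (use A B in auto)

lemma tensor_ops_adjoint:
  assumes "\<And>j. j < n \<Longrightarrow> U j \<in> carrier_mat 2 2"
  shows "mat_adjoint (tensor_ops n U) = tensor_ops n (\<lambda>j. mat_adjoint (U j))"
proof (rule eq_matI)
  fix i i' assume "i < dim_row (tensor_ops n (\<lambda>j. mat_adjoint (U j)))"
    "i' < dim_col (tensor_ops n (\<lambda>j. mat_adjoint (U j)))"
  then have i: "i < 2 ^ n" and i': "i' < 2 ^ n" by auto
  have "mat_adjoint (tensor_ops n U) $$ (i, i') = (\<Prod>j<n. cnj (U j $$ (qbit i' j, qbit i j)))"
    using i i' by (simp add: index_mat_adjoint tensor_ops_index)
  also have "\<dots> = (\<Prod>j<n. mat_adjoint (U j) $$ (qbit i j, qbit i' j))"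
    using assms by (intro prod.cong refl) (metis index_mat_adjoint carrier_matD qbit_less_2 lessThan_iff)
  finally show "mat_adjoint (tensor_ops n U) $$ (i, i') = tensor_ops n (\<lambda>j. mat_adjoint (U j)) $$ (i, i')"
    using i i' by (simp add: tensor_ops_index)
qed auto

lemma tensor_ops_one: "tensor_ops n (\<lambda>_. 1\<^sub>m 2) = 1\<^sub>m (2 ^ n)"
proof (rule eq_matI)
  fix i i' assume "i < dim_row (1\<^sub>m (2 ^ n) :: complex mat)" "i' < dim_col (1\<^sub>m (2 ^ n) :: complex mat)"
  then have i: "i < 2 ^ n" and i': "i' < 2 ^ n" by auto
  have "tensor_ops n (\<lambda>_. 1\<^sub>m 2) $$ (i, i') = (\<Prod>j<n. if qbit i j = qbit i' j then 1 else 0 :: complex)"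
    using i i' by (simp add: tensor_ops_index)
  also have "\<dots> = (if i = i' then 1 else 0)"
  proof (cases "i = i'")
    case False
    then obtain j where "j < n" "qbit i j \<noteq> qbit i' j"
      using qbit_eqI[OF i i'] by blast
    then show ?thesis
      using False by (auto intro!: prod_zero bexI[of _ j])
  qed simp
  finally show "tensor_ops n (\<lambda>_. 1\<^sub>m 2) $$ (i, i') = (1\<^sub>m (2 ^ n) :: complex mat) $$ (i, i')"
    using i i' by simp
qed auto

lemma tensor_ops_smult:
  assumes "\<And>j. j < n \<Longrightarrow> M j \<in> carrier_mat 2 2"
  shows "tensor_ops n (\<lambda>j. c j \<cdot>\<^sub>m M j) = (\<Prod>j<n. c j) \<cdot>\<^sub>m tensor_ops n M"
proof (rule eq_matI)
  fix i i' assume "i < dim_row ((\<Prod>j<n. c j) \<cdot>\<^sub>m tensor_ops n M)" "i' < dim_col ((\<Prod>j<n. c j) \<cdot>\<^sub>m tensor_ops n M)"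
  then have i: "i < 2 ^ n" and i': "i' < 2 ^ n" by auto
  have "(\<Prod>j<n. (c j \<cdot>\<^sub>m M j) $$ (qbit i j, qbit i' j)) = (\<Prod>j<n. c j * M j $$ (qbit i j, qbit i' j))"
    using assms by (intro prod.cong refl) (metis index_smult_mat(1) carrier_matD qbit_less_2 lessThan_iff)
  then show "tensor_ops n (\<lambda>j. c j \<cdot>\<^sub>m M j) $$ (i, i') = ((\<Prod>j<n. c j) \<cdot>\<^sub>m tensor_ops n M) $$ (i, i')"
    using i i' by (simp add: tensor_ops_index prod.distrib)
qed auto

lemma tensor_ops_1:
  assumes "U 0 \<in> carrier_mat 2 2"
  shows "tensor_ops 1 U = U 0"
  using assms by (intro eq_matI) (auto simp: tensor_ops_def qbit_0_of_less_2)

lemma unitary_mat_carrier: "unitary_mat d U \<Longrightarrow> U \<in> carrier_mat d d"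
  by (simp add: unitary_mat_def)

lemma unitary_mat_adjoint_mult: "unitary_mat d U \<Longrightarrow> mat_adjoint U * U = 1\<^sub>m d"
  by (simp add: unitary_mat_def)

lemma unitary_mat_mult_adjoint: "unitary_mat d U \<Longrightarrow> U * mat_adjoint U = 1\<^sub>m d"
  using mat_mult_left_right_inverse[of "mat_adjoint U" d U] by (simp add: unitary_mat_def)

lemma tensor_ops_unitary:
  assumes "\<And>j. j < n \<Longrightarrow> unitary_mat 2 (U j)"
  shows "unitary_mat (2 ^ n) (tensor_ops n U)"
proof -
  have "mat_adjoint (tensor_ops n U) * tensor_ops n U = tensor_ops n (\<lambda>j. mat_adjoint (U j) * U j)"
    using assms by (simp add: unitary_mat_carrier tensor_ops_adjoint tensor_ops_mult)
  also have "\<dots> = tensor_ops n (\<lambda>_. 1\<^sub>m 2)"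
    using assms by (intro tensor_ops_cong) (simp add: unitary_mat_adjoint_mult)
  finally show ?thesis
    by (simp add: unitary_mat_def tensor_ops_one)
qed

section \<open>Pauli operators and local Clifford operators\<close>

lemma pauli_X_carrier [simp]: "pauli_X \<in> carrier_mat 2 2"
  by (intro carrier_matI) (simp_all add: pauli_X_def mat_of_rows_list_def)

lemma pauli_Z_carrier [simp]: "pauli_Z \<in> carrier_mat 2 2"
  by (intro carrier_matI) (simp_all add: pauli_Z_def mat_of_rows_list_def)

lemma pauli_XZ_carrier [simp]: "pauli_X ^\<^sub>m a * pauli_Z ^\<^sub>m b \<in> carrier_mat 2 2"
  by (meson mult_carrier_mat pauli_X_carrier pauli_Z_carrier pow_carrier_mat)

lemma smult_smult_mat: "a \<cdot>\<^sub>m (b \<cdot>\<^sub>m A) = (a * b) \<cdot>\<^sub>m (A :: 'a::semigroup_mult mat)"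
  by (intro eq_matI) (auto simp: mult.assoc)

lemma pauli_group_carrier: "P \<in> pauli_group n \<Longrightarrow> P \<in> carrier_mat (2 ^ n) (2 ^ n)"
  unfolding pauli_group_def by auto

lemma pauli_group_1_iff: "P \<in> pauli_group 1 \<longleftrightarrow> (\<exists>c a b. P = (\<i> ^ c) \<cdot>\<^sub>m (pauli_X ^\<^sub>m a * pauli_Z ^\<^sub>m b))"
proof -
  have "tensor_ops 1 (\<lambda>j. pauli_X ^\<^sub>m a j * pauli_Z ^\<^sub>m b j) = pauli_X ^\<^sub>m a 0 * pauli_Z ^\<^sub>m b 0" for a b
    by (subst tensor_ops_1) auto
  then show ?thesis
    unfolding pauli_group_def by (auto intro: exI[of _ "\<lambda>_. _"])
qed

lemma tensor_ops_conj:
  assumes U: "\<And>j. j < n \<Longrightarrow> U j \<in> carrier_mat 2 2" and W: "\<And>j. j < n \<Longrightarrow> W j \<in> carrier_mat 2 2"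
  shows "tensor_ops n U * tensor_ops n W * mat_adjoint (tensor_ops n U)
     = tensor_ops n (\<lambda>j. U j * W j * mat_adjoint (U j))"
proof -
  have "tensor_ops n U * tensor_ops n W = tensor_ops n (\<lambda>j. U j * W j)"
    using U W by (rule tensor_ops_mult)
  moreover have "tensor_ops n (\<lambda>j. U j * W j) * tensor_ops n (\<lambda>j. mat_adjoint (U j))
      = tensor_ops n (\<lambda>j. U j * W j * mat_adjoint (U j))"
    by (rule tensor_ops_mult) (use U W in \<open>auto intro: mult_carrier_mat\<close>)
  ultimately show ?thesis
    using U by (simp add: tensor_ops_adjoint)
qed

lemma pauli_XZ_in_pauli_group_1: "pauli_X ^\<^sub>m a * pauli_Z ^\<^sub>m b \<in> pauli_group 1"
  unfolding pauli_group_1_iff by (intro exI[of _ 0] exI[of _ a] exI[of _ b]) (auto intro!: eq_matI)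

lemma smult_i_pow_in_pauli_group:
  assumes "P \<in> pauli_group n"
  shows "(\<i> ^ c) \<cdot>\<^sub>m P \<in> pauli_group n"
proof -
  obtain c' a b where "P = (\<i> ^ c') \<cdot>\<^sub>m tensor_ops n (\<lambda>j. pauli_X ^\<^sub>m a j * pauli_Z ^\<^sub>m b j)"
    using assms unfolding pauli_group_def by blast
  then show ?thesis
    unfolding pauli_group_def
    by (intro CollectI exI[of _ "c + c'"] exI[of _ a] exI[of _ b]) (simp add: smult_smult_mat power_add)
qed

lemma tensor_ops_in_pauli_group:
  assumes W: "\<And>j. j < n \<Longrightarrow> W j \<in> pauli_group 1"
  shows "tensor_ops n W \<in> pauli_group n"
proof -
  have "\<exists>cab. W j = (\<i> ^ fst cab) \<cdot>\<^sub>m (pauli_X ^\<^sub>m fst (snd cab) * pauli_Z ^\<^sub>m snd (snd cab))"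
    if "j < n" for j
    using W[OF that] unfolding pauli_group_1_iff by (metis fst_conv snd_conv)
  then obtain f where f: "\<And>j. j < n \<Longrightarrow>
      W j = (\<i> ^ fst (f j)) \<cdot>\<^sub>m (pauli_X ^\<^sub>m fst (snd (f j)) * pauli_Z ^\<^sub>m snd (snd (f j)))"
    by metis
  have "tensor_ops n W = tensor_ops n (\<lambda>j. (\<i> ^ fst (f j)) \<cdot>\<^sub>m
      (pauli_X ^\<^sub>m fst (snd (f j)) * pauli_Z ^\<^sub>m snd (snd (f j))))"
    by (rule tensor_ops_cong) (rule f)
  also have "\<dots> = (\<i> ^ (\<Sum>j<n. fst (f j))) \<cdot>\<^sub>m
      tensor_ops n (\<lambda>j. pauli_X ^\<^sub>m (\<lambda>j. fst (snd (f j))) j * pauli_Z ^\<^sub>m (\<lambda>j. snd (snd (f j))) j)"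
    by (simp add: tensor_ops_smult power_sum)
  finally show ?thesis
    unfolding pauli_group_def
    by (intro CollectI exI[of _ "\<Sum>j<n. fst (f j)"] exI[of _ "\<lambda>j. fst (snd (f j))"]
        exI[of _ "\<lambda>j. snd (snd (f j))"]) simp
qed

lemma local_clifford_conj_pauli:
  assumes cl: "\<forall>j<n. clifford 1 (U j)" and P: "P \<in> pauli_group n"
  shows "tensor_ops n U * P * mat_adjoint (tensor_ops n U) \<in> pauli_group n"
proof -
  let ?L = "tensor_ops n U"
  have U: "\<And>j. j < n \<Longrightarrow> U j \<in> carrier_mat 2 2"
    using cl unfolding clifford_def unitary_mat_def by auto
  obtain c a b where P_eq: "P = (\<i> ^ c) \<cdot>\<^sub>m tensor_ops n (\<lambda>j. pauli_X ^\<^sub>m a j * pauli_Z ^\<^sub>m b j)"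
    using P unfolding pauli_group_def by blast
  define W where "W = (\<lambda>j. pauli_X ^\<^sub>m a j * pauli_Z ^\<^sub>m b j)"
  have W: "\<And>j. W j \<in> carrier_mat 2 2"
    unfolding W_def by (rule pauli_XZ_carrier)
  have "?L * P = (\<i> ^ c) \<cdot>\<^sub>m (?L * tensor_ops n W)"
    unfolding P_eq W_def[symmetric] by (rule mult_smult_distrib) auto
  moreover have "((\<i> ^ c) \<cdot>\<^sub>m (?L * tensor_ops n W)) * mat_adjoint ?L
      = (\<i> ^ c) \<cdot>\<^sub>m (?L * tensor_ops n W * mat_adjoint ?L)"
    by (rule mult_smult_assoc_mat) auto
  ultimately have "?L * P * mat_adjoint ?L = (\<i> ^ c) \<cdot>\<^sub>m tensor_ops n (\<lambda>j. U j * W j * mat_adjoint (U j))"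
    using tensor_ops_conj[OF U W] by simp
  moreover have "tensor_ops n (\<lambda>j. U j * W j * mat_adjoint (U j)) \<in> pauli_group n"
  proof (rule tensor_ops_in_pauli_group)
    fix j assume "j < n"
    then show "U j * W j * mat_adjoint (U j) \<in> pauli_group 1"
      using cl pauli_XZ_in_pauli_group_1 unfolding clifford_def W_def by blast
  qed
  ultimately show ?thesis
    by (simp add: smult_i_pow_in_pauli_group)
qed

section \<open>Conjugation by a unitary\<close>

lemma gen_group_carrier:
  assumes "A \<subseteq> carrier_mat (2 ^ n) (2 ^ n)" "M \<in> gen_group n A"
  shows "M \<in> carrier_mat (2 ^ n) (2 ^ n)"
  using assms(2) by (induction rule: gen_group.induct) (use assms(1) in auto)

context
  fixes n :: nat and L :: "complex mat"
  assumes L: "unitary_mat (2 ^ n) L"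
begin

abbreviation cj where "cj M \<equiv> L * M * mat_adjoint L"

private lemma L_carrier: "L \<in> carrier_mat (2 ^ n) (2 ^ n)" and L_adjoint_carrier: "mat_adjoint L \<in> carrier_mat (2 ^ n) (2 ^ n)"
  using unitary_mat_carrier[OF L] by auto

lemma unitary_conj_mult:
  assumes a: "a \<in> carrier_mat (2 ^ n) (2 ^ n)" and b: "b \<in> carrier_mat (2 ^ n) (2 ^ n)"
  shows "cj a * cj b = cj (a * b)"
proof -
  have "cj a * cj b = L * a * (mat_adjoint L * L) * b * mat_adjoint L"
    using L_carrier L_adjoint_carrier a b
    by (simp add: assoc_mult_mat[of _ "2 ^ n" "2 ^ n" _ "2 ^ n" _ "2 ^ n"] mult_carrier_mat[of _ "2 ^ n" "2 ^ n" _ "2 ^ n"])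
  also have "\<dots> = cj (a * b)"
    using L_carrier L_adjoint_carrier a b unitary_mat_adjoint_mult[OF L]
    by (simp add: assoc_mult_mat[of _ "2 ^ n" "2 ^ n" _ "2 ^ n" _ "2 ^ n"] mult_carrier_mat[of _ "2 ^ n" "2 ^ n" _ "2 ^ n"])
  finally show ?thesis .
qed

lemma unitary_conj_one: "cj (1\<^sub>m (2 ^ n)) = 1\<^sub>m (2 ^ n)"
  using L_carrier unitary_mat_mult_adjoint[OF L] by simp

lemma unitary_conj_smult_one: "cj (c \<cdot>\<^sub>m 1\<^sub>m (2 ^ n)) = c \<cdot>\<^sub>m 1\<^sub>m (2 ^ n)"
proof -
  have "L * (c \<cdot>\<^sub>m 1\<^sub>m (2 ^ n)) = c \<cdot>\<^sub>m (L * 1\<^sub>m (2 ^ n))"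
    by (rule mult_smult_distrib[OF L_carrier one_carrier_mat])
  moreover have "(c \<cdot>\<^sub>m (L * 1\<^sub>m (2 ^ n))) * mat_adjoint L = c \<cdot>\<^sub>m (cj (1\<^sub>m (2 ^ n)))"
    by (rule mult_smult_assoc_mat[OF _ L_adjoint_carrier]) (use L_carrier in simp)
  ultimately show ?thesis
    using unitary_conj_one by simp
qed

lemma unitary_conj_uminus_one: "cj (- 1\<^sub>m (2 ^ n)) = - 1\<^sub>m (2 ^ n)"
proof -
  have minus_one: "- 1\<^sub>m (2 ^ n) = (-1 :: complex) \<cdot>\<^sub>m 1\<^sub>m (2 ^ n)"
    by (intro eq_matI) auto
  show ?thesis
    unfolding minus_one by (rule unitary_conj_smult_one)
qed

lemma unitary_adjoint_conj_cancel:
  assumes a: "a \<in> carrier_mat (2 ^ n) (2 ^ n)"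
  shows "mat_adjoint L * (cj a) * L = a"
proof -
  have "mat_adjoint L * (cj a) * L = (mat_adjoint L * L) * a * (mat_adjoint L * L)"
    using L_carrier L_adjoint_carrier a
    by (simp add: assoc_mult_mat[of _ "2 ^ n" "2 ^ n" _ "2 ^ n" _ "2 ^ n"] mult_carrier_mat[of _ "2 ^ n" "2 ^ n" _ "2 ^ n"])
  then show ?thesis
    using unitary_mat_adjoint_mult[OF L] a by simp
qed

lemma unitary_conj_inj:
  assumes "a \<in> carrier_mat (2 ^ n) (2 ^ n)" "b \<in> carrier_mat (2 ^ n) (2 ^ n)" "cj a = cj b"
  shows "a = b"
  using unitary_adjoint_conj_cancel[OF assms(1)] unitary_adjoint_conj_cancel[OF assms(2)] assms(3) by metis

lemma unitary_adjoint_mult_vec_cancel: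
  assumes w: "w \<in> carrier_vec (2 ^ n)"
  shows "mat_adjoint L *\<^sub>v (L *\<^sub>v w) = w"
proof -
  have "mat_adjoint L *\<^sub>v (L *\<^sub>v w) = (mat_adjoint L * L) *\<^sub>v w"
    by (rule assoc_mult_mat_vec[OF L_adjoint_carrier L_carrier w, symmetric])
  then show ?thesis
    using unitary_mat_adjoint_mult[OF L] w by simp
qed

lemma unitary_mult_vec_adjoint_cancel:
  assumes w: "w \<in> carrier_vec (2 ^ n)"
  shows "L *\<^sub>v (mat_adjoint L *\<^sub>v w) = w"
proof -
  have "L *\<^sub>v (mat_adjoint L *\<^sub>v w) = (L * mat_adjoint L) *\<^sub>v w"
    by (rule assoc_mult_mat_vec[OF L_carrier L_adjoint_carrier w, symmetric])
  then show ?thesis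
    using unitary_mat_mult_adjoint[OF L] w by simp
qed

lemma unitary_conj_fixes_iff:
  assumes s: "s \<in> carrier_mat (2 ^ n) (2 ^ n)" and v: "v \<in> carrier_vec (2 ^ n)"
  shows "cj s *\<^sub>v v = v \<longleftrightarrow> s *\<^sub>v (mat_adjoint L *\<^sub>v v) = mat_adjoint L *\<^sub>v v"
proof -
  have Lv: "mat_adjoint L *\<^sub>v v \<in> carrier_vec (2 ^ n)"
    using L_adjoint_carrier v by simp
  have "(cj s) *\<^sub>v v = (L * s) *\<^sub>v (mat_adjoint L *\<^sub>v v)"
    using L_carrier L_adjoint_carrier s v by (intro assoc_mult_mat_vec) auto
  also have "\<dots> = L *\<^sub>v (s *\<^sub>v (mat_adjoint L *\<^sub>v v))"
    using L_carrier s Lv by (rule assoc_mult_mat_vec)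
  finally have "(cj s) *\<^sub>v v = L *\<^sub>v (s *\<^sub>v (mat_adjoint L *\<^sub>v v))" .
  then show ?thesis
    using unitary_adjoint_mult_vec_cancel unitary_mult_vec_adjoint_cancel[OF v] s Lv
    by (metis mult_mat_vec_carrier)
qed

lemma codespace_unitary_conj:
  assumes S: "S \<subseteq> carrier_mat (2 ^ n) (2 ^ n)"
  shows "codespace n (cj ` S) = (\<lambda>w. L *\<^sub>v w) ` codespace n S"
proof (rule equalityI; rule subsetI)
  fix v assume v: "v \<in> codespace n (cj ` S)"
  then have "mat_adjoint L *\<^sub>v v \<in> codespace n S"
    using S L_adjoint_carrier unitary_conj_fixes_iff by (auto simp: codespace_def)
  moreover have "v = L *\<^sub>v (mat_adjoint L *\<^sub>v v)"
    using v unitary_mult_vec_adjoint_cancel by (simp add: codespace_def)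
  ultimately show "v \<in> (\<lambda>w. L *\<^sub>v w) ` codespace n S"
    by blast
next
  fix v assume "v \<in> (\<lambda>w. L *\<^sub>v w) ` codespace n S"
  then obtain w where w: "w \<in> codespace n S" "v = L *\<^sub>v w"
    by blast
  then have "mat_adjoint L *\<^sub>v v = w"
    using unitary_adjoint_mult_vec_cancel by (simp add: codespace_def)
  then show "v \<in> codespace n (cj ` S)"
    using w S L_carrier unitary_conj_fixes_iff by (auto simp: codespace_def)
qed

lemma gen_group_unitary_conj:
  assumes A: "A \<subseteq> carrier_mat (2 ^ n) (2 ^ n)"
  shows "gen_group n (cj ` A) = cj ` gen_group n A"
proof
  show "gen_group n (cj ` A) \<subseteq> cj ` gen_group n A"
  proof
    fix M assume "M \<in> gen_group n (cj ` A)"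
    then show "M \<in> cj ` gen_group n A"
    proof (induction rule: gen_group.induct)
      case gen_one
      have "cj (1\<^sub>m (2 ^ n)) = 1\<^sub>m (2 ^ n)" by (rule unitary_conj_one)
      then show ?case using gen_group.gen_one by (metis image_eqI)
    next
      case (gen_mult g h)
      then obtain a h' where a: "a \<in> A" "g = cj a" and h': "h' \<in> gen_group n A" "h = cj h'" by blast
      have "g * h = cj (a * h')"
        using unitary_conj_mult[of a h'] a h' A gen_group_carrier[OF A h'(1)] by auto
      then show ?case using gen_group.gen_mult[OF a(1) h'(1)] by blast
    qed
  qed
next
  show "cj ` gen_group n A \<subseteq> gen_group n (cj ` A)"
  proof
    fix M assume "M \<in> cj ` gen_group n A"
    then obtain M' where M': "M' \<in> gen_group n A" "M = cj M'" by blast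
    from M'(1) have "cj M' \<in> gen_group n (cj ` A)"
    proof (induction rule: gen_group.induct)
      case gen_one
      then show ?case using unitary_conj_one gen_group.gen_one by metis
    next
      case (gen_mult g h)
      have "cj (g * h) = cj g * cj h"
        using unitary_conj_mult[of g h] gen_mult A gen_group_carrier[OF A gen_mult(2)] by auto
      moreover have "cj g \<in> cj ` A" using gen_mult(1) by blast
      ultimately show ?case using gen_group.gen_mult[OF _ gen_mult.IH] by metis
    qed
    then show "M \<in> gen_group n (cj ` A)" using M' by simp
  qed
qed

lemma independent_gen_unitary_conj:
  assumes gs: "set gs \<subseteq> carrier_mat (2 ^ n) (2 ^ n)" and i: "i < length gs"
    and indep: "gs ! i \<notin> gen_group n (set gs - {gs ! i})"
  shows "map cj gs ! i \<notin> gen_group n (set (map cj gs) - {map cj gs ! i})"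
proof
  have sub: "set gs - {gs ! i} \<subseteq> carrier_mat (2 ^ n) (2 ^ n)"
    using gs by auto
  have "inj_on cj (set gs)"
    using unitary_conj_inj gs by (auto intro!: inj_onI)
  then have "set (map cj gs) - {map cj gs ! i} = cj ` (set gs - {gs ! i})"
    using i by (simp add: inj_on_image_set_diff[of _ "set gs"])
  moreover assume "map cj gs ! i \<in> gen_group n (set (map cj gs) - {map cj gs ! i})"
  ultimately have "cj (gs ! i) \<in> cj ` gen_group n (set gs - {gs ! i})"
    using i gen_group_unitary_conj[OF sub] by simp
  then obtain M where M: "M \<in> gen_group n (set gs - {gs ! i})" "cj (gs ! i) = cj M"
    by blast
  have "gs ! i \<in> carrier_mat (2 ^ n) (2 ^ n)"
    using gs i by (simp add: subset_iff)
  then have "gs ! i = M"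
    using unitary_conj_inj[OF _ gen_group_carrier[OF sub M(1)] M(2)] by simp
  then show False
    using indep M(1) by simp
qed

lemma unitary_conj_commute:
  assumes "a \<in> carrier_mat (2 ^ n) (2 ^ n)" "b \<in> carrier_mat (2 ^ n) (2 ^ n)" "a * b = b * a"
  shows "cj a * cj b = cj b * cj a"
  using assms unitary_conj_mult[of a b] unitary_conj_mult[of b a] by simp

lemma uminus_one_in_unitary_conj_image:
  assumes S: "S \<subseteq> carrier_mat (2 ^ n) (2 ^ n)" and minus_one: "- 1\<^sub>m (2 ^ n) \<in> cj ` S"
  shows "- 1\<^sub>m (2 ^ n) \<in> S"
proof -
  obtain a where a: "a \<in> S" "- 1\<^sub>m (2 ^ n) = cj a"
    using minus_one by blast
  have "cj (- 1\<^sub>m (2 ^ n)) = cj a"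
    using unitary_conj_uminus_one a(2) by (rule trans)
  then have "- 1\<^sub>m (2 ^ n) = a"
    using unitary_conj_inj[of "- 1\<^sub>m (2 ^ n)" a] a(1) S by auto
  then show ?thesis
    using a(1) by simp
qed

lemma stabilizer_group_unitary_conj:
  assumes st: "stabilizer_group n k S"
    and pauli: "\<And>P. P \<in> pauli_group n \<Longrightarrow> cj P \<in> pauli_group n"
  shows "stabilizer_group n k (cj ` S)"
proof -
  obtain gs where gs: "length gs = n - k" "set gs \<subseteq> pauli_group n" "S = gen_group n (set gs)"
    and indep: "\<forall>i < length gs. gs ! i \<notin> gen_group n (set gs - {gs ! i})"
    and comm: "\<forall>g\<in>S. \<forall>h\<in>S. g * h = h * g" and no_minus: "- 1\<^sub>m (2 ^ n) \<notin> S"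
    using st unfolding stabilizer_group_def by blast
  have gs_carrier: "set gs \<subseteq> carrier_mat (2 ^ n) (2 ^ n)"
    using gs(2) pauli_group_carrier by blast
  have S_carrier: "S \<subseteq> carrier_mat (2 ^ n) (2 ^ n)"
    using gen_group_carrier[OF gs_carrier] gs(3) by blast
  have "\<forall>g\<in>cj ` S. \<forall>h\<in>cj ` S. g * h = h * g"
    using comm S_carrier unitary_conj_commute by (auto simp: subset_iff)
  moreover have "- 1\<^sub>m (2 ^ n) \<notin> cj ` S"
    using uminus_one_in_unitary_conj_image[OF S_carrier] no_minus by blast
  moreover have "length (map cj gs) = n - k" "set (map cj gs) \<subseteq> pauli_group n"
    "cj ` S = gen_group n (set (map cj gs))"
    using gs pauli gen_group_unitary_conj[OF gs_carrier] by auto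
  moreover have "\<forall>i < length (map cj gs). map cj gs ! i \<notin> gen_group n (set (map cj gs) - {map cj gs ! i})"
    using independent_gen_unitary_conj[OF gs_carrier] indep by simp
  ultimately show ?thesis
    unfolding stabilizer_group_def by blast
qed

end

lemma adjoint_mult_unitary_sandwich:
  assumes L: "unitary_mat N L" and M: "M \<in> carrier_mat N K" and C: "C \<in> carrier_mat K K"
  shows "mat_adjoint (L * M * C) * (L * M * C) = mat_adjoint C * (mat_adjoint M * M) * C"
proof -
  have Lc: "L \<in> carrier_mat N N" using unitary_mat_carrier[OF L] .
  have Lac: "mat_adjoint L \<in> carrier_mat N N" using Lc by simp
  have Mac: "mat_adjoint M \<in> carrier_mat K N" using M by simp
  have Cac: "mat_adjoint C \<in> carrier_mat K K" using C by simp
  have LM: "L * M \<in> carrier_mat N K" using Lc M by simp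
  have MC: "M * C \<in> carrier_mat N K" using M C by simp
  have LMC: "L * M * C \<in> carrier_mat N K" using LM C by simp
  have BD: "mat_adjoint M * mat_adjoint L \<in> carrier_mat K N" using Mac Lac by simp
  have "mat_adjoint (L * M * C) = mat_adjoint C * (mat_adjoint M * mat_adjoint L)"
    using mat_adjoint_mult[OF LM C] mat_adjoint_mult[OF Lc M] by simp
  then have "mat_adjoint (L * M * C) * (L * M * C) = mat_adjoint C * (mat_adjoint M * mat_adjoint L) * (L * M * C)"
    by simp
  also have "\<dots> = mat_adjoint C * ((mat_adjoint M * mat_adjoint L) * (L * M * C))"
    by (rule assoc_mult_mat[OF Cac BD LMC])
  also have "(mat_adjoint M * mat_adjoint L) * (L * M * C) = mat_adjoint M * (mat_adjoint L * (L * M * C))"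
    by (rule assoc_mult_mat[OF Mac Lac LMC])
  also have "mat_adjoint L * (L * M * C) = (mat_adjoint L * L) * (M * C)"
    using assoc_mult_mat[OF Lac Lc MC, symmetric] assoc_mult_mat[OF Lc M C] by simp
  also have "(mat_adjoint L * L) * (M * C) = M * C" using unitary_mat_adjoint_mult[OF L] left_mult_one_mat[OF MC] by simp
  also have "mat_adjoint M * (M * C) = (mat_adjoint M * M) * C"
    by (rule assoc_mult_mat[OF Mac M C, symmetric])
  also have "mat_adjoint C * ((mat_adjoint M * M) * C) = mat_adjoint C * (mat_adjoint M * M) * C"
    by (rule assoc_mult_mat[OF Cac mult_carrier_mat[OF Mac M] C, symmetric])
  finally show ?thesis .
qed

lemma stabilizer_group_carrier:
  assumes "stabilizer_group n k S"
  shows "S \<subseteq> carrier_mat (2 ^ n) (2 ^ n)"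
proof -
  obtain gs where "set gs \<subseteq> pauli_group n" "S = gen_group n (set gs)"
    using assms unfolding stabilizer_group_def by blast
  moreover have "pauli_group n \<subseteq> carrier_mat (2 ^ n) (2 ^ n)"
    using pauli_group_carrier by blast
  ultimately show ?thesis
    using gen_group_carrier[of "set gs" n] by blast
qed

lemma range_unitary_sandwich:
  assumes L: "L \<in> carrier_mat N N" and E: "E \<in> carrier_mat N K" and C: "unitary_mat K C"
  shows "{L * E * C *\<^sub>v v | v. v \<in> carrier_vec K} = (\<lambda>w. L *\<^sub>v w) ` {E *\<^sub>v w | w. w \<in> carrier_vec K}"
proof (rule equalityI; rule subsetI)
  have C_carrier: "C \<in> carrier_mat K K"
    using C by (rule unitary_mat_carrier)
  have eq: "L * E * C *\<^sub>v v = L *\<^sub>v (E *\<^sub>v (C *\<^sub>v v))" if v: "v \<in> carrier_vec K" for v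
  proof -
    have "L * E * C *\<^sub>v v = (L * E) *\<^sub>v (C *\<^sub>v v)"
      using L E C_carrier v by (intro assoc_mult_mat_vec) auto
    also have "\<dots> = L *\<^sub>v (E *\<^sub>v (C *\<^sub>v v))"
      using L E C_carrier v by (intro assoc_mult_mat_vec) auto
    finally show ?thesis .
  qed
  {
    fix u assume "u \<in> {L * E * C *\<^sub>v v | v. v \<in> carrier_vec K}"
    then obtain v where v: "v \<in> carrier_vec K" "u = L * E * C *\<^sub>v v"
      by blast
    then have "u = L *\<^sub>v (E *\<^sub>v (C *\<^sub>v v))"
      using eq by simp
    moreover have "E *\<^sub>v (C *\<^sub>v v) \<in> {E *\<^sub>v w | w. w \<in> carrier_vec K}"
      using C_carrier v(1) by auto
    ultimately show "u \<in> (\<lambda>w. L *\<^sub>v w) ` {E *\<^sub>v w | w. w \<in> carrier_vec K}"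
      by blast
  next
    fix u assume "u \<in> (\<lambda>w. L *\<^sub>v w) ` {E *\<^sub>v w | w. w \<in> carrier_vec K}"
    then obtain w where w: "w \<in> carrier_vec K" "u = L *\<^sub>v (E *\<^sub>v w)"
      by blast
    have "C *\<^sub>v (mat_adjoint C *\<^sub>v w) = (C * mat_adjoint C) *\<^sub>v w"
      using C_carrier w(1) by (simp add: assoc_mult_mat_vec[of _ K K _ K])
    then have "C *\<^sub>v (mat_adjoint C *\<^sub>v w) = w"
      using unitary_mat_mult_adjoint[OF C] w(1) by simp
    moreover have "mat_adjoint C *\<^sub>v w \<in> carrier_vec K"
      by (rule mult_mat_vec_carrier[OF mat_adjoint_carrier[OF C_carrier] w(1)])
    moreover note eq[of "mat_adjoint C *\<^sub>v w"]
    ultimately have "u = L * E * C *\<^sub>v (mat_adjoint C *\<^sub>v w) \<and> mat_adjoint C *\<^sub>v w \<in> carrier_vec K"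
      using w by simp
    then show "u \<in> {L * E * C *\<^sub>v v | v. v \<in> carrier_vec K}"
      by blast
  }
qed

lemma scalar_isometry_unitary_sandwich_iff:
  assumes L: "unitary_mat (2 ^ n) L" and E: "E \<in> carrier_mat (2 ^ n) (2 ^ k)" and C: "unitary_mat (2 ^ k) C"
  shows "mat_adjoint (L * E * C) * (L * E * C) = c \<cdot>\<^sub>m 1\<^sub>m (2 ^ k) \<longleftrightarrow> mat_adjoint E * E = c \<cdot>\<^sub>m 1\<^sub>m (2 ^ k)"
proof -
  have C_carrier: "C \<in> carrier_mat (2 ^ k) (2 ^ k)" and C_adj: "mat_adjoint C \<in> carrier_mat (2 ^ k) (2 ^ k)"
    using unitary_mat_carrier[OF C] by auto
  have EE: "mat_adjoint E * E \<in> carrier_mat (2 ^ k) (2 ^ k)"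
    using mat_adjoint_carrier[OF E] E by (rule mult_carrier_mat)
  have sandwich: "mat_adjoint (L * E * C) * (L * E * C) = mat_adjoint C * (mat_adjoint E * E) * C"
    by (rule adjoint_mult_unitary_sandwich[OF L E C_carrier])
  have "mat_adjoint C * (c \<cdot>\<^sub>m 1\<^sub>m (2 ^ k)) = c \<cdot>\<^sub>m mat_adjoint C"
    using mult_smult_distrib[OF C_adj one_carrier_mat, of c] right_mult_one_mat[OF C_adj] by simp
  then have "mat_adjoint C * (c \<cdot>\<^sub>m 1\<^sub>m (2 ^ k)) * C = c \<cdot>\<^sub>m 1\<^sub>m (2 ^ k)"
    using mult_smult_assoc_mat[OF C_adj C_carrier, of c] unitary_mat_adjoint_mult[OF C] by simp
  moreover have "C * (mat_adjoint C * (mat_adjoint E * E) * C) * mat_adjoint C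
      = (C * mat_adjoint C) * (mat_adjoint E * E) * (C * mat_adjoint C)"
    using C_carrier C_adj EE
    by (simp add: assoc_mult_mat[of _ "2 ^ k" "2 ^ k" _ "2 ^ k" _ "2 ^ k"] mult_carrier_mat[of _ "2 ^ k" "2 ^ k" _ "2 ^ k"])
  then have "C * (mat_adjoint C * (mat_adjoint E * E) * C) * mat_adjoint C = mat_adjoint E * E"
    using unitary_mat_mult_adjoint[OF C] by (simp add: left_mult_one_mat[OF EE] right_mult_one_mat[OF EE])
  ultimately show ?thesis
    using sandwich unitary_conj_smult_one[OF C] by metis
qed

lemma stabilizer_encoder_unitary_sandwich:
  assumes enc: "stabilizer_encoder n k E" and L: "unitary_mat (2 ^ n) L"
    and pauli: "\<And>P. P \<in> pauli_group n \<Longrightarrow> L * P * mat_adjoint L \<in> pauli_group n"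
    and C: "unitary_mat (2 ^ k) C"
  shows "stabilizer_encoder n k (L * E * C)"
proof -
  obtain c S where E: "E \<in> carrier_mat (2 ^ n) (2 ^ k)" and c: "c \<noteq> 0" "mat_adjoint E * E = c \<cdot>\<^sub>m 1\<^sub>m (2 ^ k)"
    and S: "stabilizer_group n k S" "{E *\<^sub>v v | v. v \<in> carrier_vec (2 ^ k)} = codespace n S"
    using enc unfolding stabilizer_encoder_def by blast
  have "{L * E * C *\<^sub>v v | v. v \<in> carrier_vec (2 ^ k)} = codespace n ((\<lambda>s. L * s * mat_adjoint L) ` S)"
    using range_unitary_sandwich[OF unitary_mat_carrier[OF L] E C] S
      codespace_unitary_conj[OF L stabilizer_group_carrier[OF S(1)]] by simp
  moreover have "L * E * C \<in> carrier_mat (2 ^ n) (2 ^ k)"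
    using unitary_mat_carrier[OF L] E unitary_mat_carrier[OF C] by simp
  ultimately show ?thesis
    unfolding stabilizer_encoder_def
    using c scalar_isometry_unitary_sandwich_iff[OF L E C] stabilizer_group_unitary_conj[OF L S(1) pauli]
    by blast
qed

section \<open>Graph states\<close>

definition edges_below :: "nat \<Rightarrow> (nat \<times> nat) list \<Rightarrow> bool" where
  "edges_below n E \<longleftrightarrow> (\<forall>e \<in> set E. fst e < n \<and> snd e < n)"

text \<open>For the edge list \<open>E\<close> of \<open>G\<close> with adjacency matrix \<open>A\<close>:
  \<open>|G\<rangle> = 2^(-n/2) \<Sum>\<^sub>y (-1)^(edge_form E y) |y\<rangle>\<close> and \<open>adj_vec n E s = A s\<close>.\<close>

definition edge_form :: "(nat \<times> nat) list \<Rightarrow> bit vec \<Rightarrow> bit" where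
  "edge_form E y = sum_list (map (\<lambda>(u,v). y $ u * y $ v) E)"

definition adj_vec :: "nat \<Rightarrow> (nat \<times> nat) list \<Rightarrow> bit vec \<Rightarrow> bit vec" where
  "adj_vec n E s = vec n (\<lambda>t. sum_list (map (\<lambda>(u,v). (if u = t then s $ v else 0) + (if v = t then s $ u else 0)) E))"

lemma adj_vec_carrier[simp]: "adj_vec n E s \<in> carrier_vec n"
  by (simp add: adj_vec_def)

lemma dim_adj_vec[simp]: "dim_vec (adj_vec n E s) = n"
  by (simp add: adj_vec_def)

lemma sum_sum_list: "(\<Sum>t\<in>A. sum_list (map (f t) E)) = sum_list (map (\<lambda>e. \<Sum>t\<in>A. f t e) E)"
  by (induction E) (auto simp: sum.distrib)

lemma sum_list_pair_add:
  "sum_list (map (\<lambda>(u,v). f u v + g u v) E) = sum_list (map (\<lambda>(u,v). f u v) E) + sum_list (map (\<lambda>(u,v). g u v) E)"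
  for f g :: "nat \<Rightarrow> nat \<Rightarrow> 'a :: comm_monoid_add"
  by (induction E) (auto simp: ac_simps)

lemma scalar_prod_adj_vec:
  assumes E: "edges_below n E" and y: "y \<in> carrier_vec n"
  shows "y \<bullet> adj_vec n E s = sum_list (map (\<lambda>(u,v). y $ u * s $ v + y $ v * s $ u) E)"
proof -
  have "y \<bullet> adj_vec n E s = (\<Sum>t<n. y $ t * sum_list (map (\<lambda>(u,v). (if u = t then s $ v else 0) + (if v = t then s $ u else 0)) E))"
    by (simp add: scalar_prod_def adj_vec_def atLeast0LessThan)
  also have "\<dots> = (\<Sum>t<n. sum_list (map (\<lambda>e. y $ t * (case e of (u,v) \<Rightarrow> (if u = t then s $ v else 0) + (if v = t then s $ u else 0))) E))"
    by (simp add: sum_list_const_mult[symmetric] o_def case_prod_beta)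
  also have "\<dots> = sum_list (map (\<lambda>e. \<Sum>t<n. y $ t * (case e of (u,v) \<Rightarrow> (if u = t then s $ v else 0) + (if v = t then s $ u else 0))) E)"
    by (rule sum_sum_list)
  also have "\<dots> = sum_list (map (\<lambda>(u,v). y $ u * s $ v + y $ v * s $ u) E)"
  proof (rule arg_cong[where f = sum_list], rule map_cong[OF refl])
    fix e assume e: "e \<in> set E"
    obtain u v where uv: "e = (u, v)" by force
    have u: "u < n" and v: "v < n" using E e uv unfolding edges_below_def by auto
    have "(\<Sum>t<n. y $ t * ((if u = t then s $ v else 0) + (if v = t then s $ u else 0)))
        = (\<Sum>t<n. (if u = t then y $ t * s $ v else 0)) + (\<Sum>t<n. (if v = t then y $ t * s $ u else 0))"
    proof -
      have "\<And>t. y $ t * ((if u = t then s $ v else 0) + (if v = t then s $ u else 0)) =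
          (if u = t then y $ t * s $ v else 0) + (if v = t then y $ t * s $ u else 0)"
        by (simp add: distrib_left)
      then show ?thesis by (simp add: sum.distrib)
    qed
    also have "\<dots> = y $ u * s $ v + y $ v * s $ u" using u v by (simp add: sum.delta)
    finally show "(\<Sum>t<n. y $ t * (case e of (u,v) \<Rightarrow> (if u = t then s $ v else 0) + (if v = t then s $ u else 0)))
        = (case e of (u, v) \<Rightarrow> y $ u * s $ v + y $ v * s $ u)" using uv by simp
  qed
  finally show ?thesis .
qed

lemma edge_form_add:
  assumes E: "edges_below n E" and y: "y \<in> carrier_vec n" and s: "s \<in> carrier_vec n"
  shows "edge_form E (y + s) = edge_form E y + edge_form E s + y \<bullet> adj_vec n E s"
proof -
  have "edge_form E (y + s) = sum_list (map (\<lambda>(u,v). y $ u * y $ v + s $ u * s $ v + (y $ u * s $ v + y $ v * s $ u)) E)"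
    unfolding edge_form_def
  proof (rule arg_cong[where f = sum_list], rule map_cong[OF refl])
    fix e assume e: "e \<in> set E"
    obtain u v where uv: "e = (u, v)" by force
    have u: "u < n" and v: "v < n" using E e uv unfolding edges_below_def by auto
    show "(case e of (u, v) \<Rightarrow> (y + s) $ u * (y + s) $ v) =
        (case e of (u, v) \<Rightarrow> y $ u * y $ v + s $ u * s $ v + (y $ u * s $ v + y $ v * s $ u))"
      using uv u v y s by (simp add: algebra_simps)
  qed
  also have "\<dots> = edge_form E y + edge_form E s + sum_list (map (\<lambda>(u,v). y $ u * s $ v + y $ v * s $ u) E)"
    unfolding edge_form_def by (simp only: sum_list_pair_add)
  also have "\<dots> = edge_form E y + edge_form E s + y \<bullet> adj_vec n E s" using scalar_prod_adj_vec[OF E y] by simp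
  finally show ?thesis .
qed

lemma adj_vec_add:
  assumes s: "s \<in> carrier_vec n" and t: "t \<in> carrier_vec n" and E: "edges_below n E"
  shows "adj_vec n E (s + t) = adj_vec n E s + adj_vec n E t"
proof (rule eq_vecI)
  fix x assume "x < dim_vec (adj_vec n E s + adj_vec n E t)"
  then have x: "x < n" by simp
  have "adj_vec n E (s + t) $ x = sum_list (map (\<lambda>e. (case e of (u,v) \<Rightarrow> (if u = x then s $ v else 0) + (if v = x then s $ u else 0))
      + (case e of (u,v) \<Rightarrow> (if u = x then t $ v else 0) + (if v = x then t $ u else 0))) E)"
    unfolding adj_vec_def using x
  proof (simp, intro arg_cong[where f = sum_list] map_cong refl)
    fix e assume e: "e \<in> set E"
    obtain u v where uv: "e = (u, v)" by force
    have u: "u < n" and v: "v < n" using E e uv unfolding edges_below_def by auto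
    show "(case e of (u, v) \<Rightarrow> (if u = x then (s + t) $ v else 0) + (if v = x then (s + t) $ u else 0)) =
         (case e of (u, v) \<Rightarrow> (if u = x then s $ v else 0) + (if v = x then s $ u else 0)) +
         (case e of (u, v) \<Rightarrow> (if u = x then t $ v else 0) + (if v = x then t $ u else 0))"
      using uv u v s t by (simp add: algebra_simps)
  qed
  also have "\<dots> = (adj_vec n E s + adj_vec n E t) $ x"
    unfolding adj_vec_def using x by (simp add: sum_list_addf)
  finally show "adj_vec n E (s + t) $ x = (adj_vec n E s + adj_vec n E t) $ x" .
qed simp

lemma scalar_prod_adj_vec_sym:
  assumes E: "edges_below n E" and s: "s \<in> carrier_vec n" and t: "t \<in> carrier_vec n"
  shows "t \<bullet> adj_vec n E s = s \<bullet> adj_vec n E t"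
  unfolding scalar_prod_adj_vec[OF E s] scalar_prod_adj_vec[OF E t]
  by (intro arg_cong[where f = sum_list] map_cong refl) (auto simp: algebra_simps)

lemma scalar_prod_adj_vec_self:
  assumes E: "edges_below n E" and s: "s \<in> carrier_vec n"
  shows "s \<bullet> adj_vec n E s = 0"
proof -
  have "s \<bullet> adj_vec n E s = sum_list (map (\<lambda>e. 0) E)"
    unfolding scalar_prod_adj_vec[OF E s]
    by (intro arg_cong[where f = sum_list] map_cong refl) (auto simp: mult.commute)
  then show ?thesis by simp
qed

lemma edge_form_zero: "edges_below n E \<Longrightarrow> edge_form E (0\<^sub>v n) = 0"
  unfolding edge_form_def edges_below_def
  by (induction E) auto

lemma adj_vec_zero: "edges_below n E \<Longrightarrow> adj_vec n E (0\<^sub>v n) = 0\<^sub>v n"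
  unfolding adj_vec_def edges_below_def
proof (intro eq_vecI)
  fix x assume "\<forall>e\<in>set E. fst e < n \<and> snd e < n" "x < dim_vec (0\<^sub>v n)"
  then show "vec n (\<lambda>t. \<Sum>(u, v)\<leftarrow>E. (if u = t then 0\<^sub>v n $ v else 0) + (if v = t then 0\<^sub>v n $ u else 0)) $ x = 0\<^sub>v n $ x"
    by (induction E) auto
qed simp

definition edge_list :: "nat \<Rightarrow> bit mat \<Rightarrow> (nat \<times> nat) list" where
  "edge_list n G = [(u, v). u \<leftarrow> [0..<n], v \<leftarrow> [0..<n], (u, v) \<in> graph_edges n G]"

lemma edges_below_edge_list: "edges_below n (edge_list n G)"
  by (auto simp: edges_below_def edge_list_def)

definition amp :: "nat \<Rightarrow> complex" where
  "amp n = complex_of_real (1 / sqrt (2 ^ n))"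

lemma cnj_amp_mult_amp: "cnj (amp n) * amp n = 1 / 2 ^ n"
proof -
  have a: "sqrt (2 ^ n) * sqrt (2 ^ n) = (2 ^ n :: real)" by simp
  have r: "(1 / sqrt (2 ^ n)) * (1 / sqrt (2 ^ n)) = (1 / 2 ^ n :: real)"
    by (simp only: a times_divide_times_eq mult_1)
  have "cnj (amp n) * amp n = complex_of_real ((1 / sqrt (2 ^ n)) * (1 / sqrt (2 ^ n)))"
    by (simp only: amp_def Complex.complex_cnj_complex_of_real of_real_mult)
  also have "\<dots> = complex_of_real (1 / 2 ^ n)" by (simp only: r)
  also have "\<dots> = 1 / 2 ^ n" by simp
  finally show ?thesis .
qed

lemma diag_mat_mult_vec:
  assumes w: "w \<in> carrier_vec N"
  shows "mat N N (\<lambda>(i, i'). if i = i' then f i else 0) *\<^sub>v w = vec N (\<lambda>i. f i * w $ i)"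
proof (rule eq_vecI)
  fix i assume "i < dim_vec (vec N (\<lambda>i. f i * w $ i))"
  then have i: "i < N" by simp
  have "(mat N N (\<lambda>(i, i'). if i = i' then f i else 0) *\<^sub>v w) $ i = (\<Sum>i'<N. (if i = i' then f i else 0) * w $ i')"
    using i w by (simp add: scalar_prod_def atLeast0LessThan)
  also have "\<dots> = (\<Sum>i'<N. if i = i' then f i * w $ i' else 0)" by (rule sum.cong) auto
  also have "\<dots> = f i * w $ i" using i by (simp add: sum.delta)
  finally show "(mat N N (\<lambda>(i, i'). if i = i' then f i else 0) *\<^sub>v w) $ i = vec N (\<lambda>i. f i * w $ i) $ i"
    using i by simp
qed simp

lemma foldr_cz_gate_plus_state:
  assumes E: "edges_below n E"
  shows "foldr (\<lambda>(u, v) s. cz_gate n u v *\<^sub>v s) E (plus_state n) = vec (2 ^ n) (\<lambda>i. bit_sign (edge_form E (bits_vec n i)) * amp n)"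
  using E
proof (induction E)
  case Nil
  then show ?case by (intro eq_vecI) (auto simp: plus_state_def amp_def edge_form_def)
next
  case (Cons e E)
  obtain u v where e: "e = (u, v)" by force
  have u: "u < n" and v: "v < n" using Cons.prems e unfolding edges_below_def by auto
  have EE: "edges_below n E" using Cons.prems unfolding edges_below_def by auto
  have "foldr (\<lambda>(u, v) s. cz_gate n u v *\<^sub>v s) (e # E) (plus_state n)
      = cz_gate n u v *\<^sub>v vec (2 ^ n) (\<lambda>i. bit_sign (edge_form E (bits_vec n i)) * amp n)"
    using Cons.IH[OF EE] e by simp
  also have "\<dots> = vec (2 ^ n) (\<lambda>i. (if qbit i u = 1 \<and> qbit i v = 1 then -1 else 1) * (bit_sign (edge_form E (bits_vec n i)) * amp n))"
    unfolding cz_gate_def by (subst diag_mat_mult_vec) auto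
  also have "\<dots> = vec (2 ^ n) (\<lambda>i. bit_sign (edge_form (e # E) (bits_vec n i)) * amp n)"
  proof (rule eq_vecI)
    fix i assume "i < dim_vec (vec (2 ^ n) (\<lambda>i. bit_sign (edge_form (e # E) (bits_vec n i)) * amp n))"
    then have i: "i < 2 ^ n" by simp
    have "edge_form (e # E) (bits_vec n i) = bits_vec n i $ u * bits_vec n i $ v + edge_form E (bits_vec n i)"
      using e by (simp add: edge_form_def)
    moreover have "bit_sign (bits_vec n i $ u * bits_vec n i $ v) = (if qbit i u = 1 \<and> qbit i v = 1 then -1 else 1)"
      using u v qbit_cases[of i u] qbit_cases[of i v] by (auto simp: bit_sign_def)
    ultimately show "vec (2 ^ n) (\<lambda>i. (if qbit i u = 1 \<and> qbit i v = 1 then -1 else 1) * (bit_sign (edge_form E (bits_vec n i)) * amp n)) $ i =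
         vec (2 ^ n) (\<lambda>i. bit_sign (edge_form (e # E) (bits_vec n i)) * amp n) $ i"
      using i by (simp add: bit_sign_add)
  qed simp
  finally show ?case .
qed

lemma graph_state_eq: "graph_state n G = vec (2 ^ n) (\<lambda>i. bit_sign (edge_form (edge_list n G) (bits_vec n i)) * amp n)"
  unfolding graph_state_def edge_list_def[symmetric] by (rule foldr_cz_gate_plus_state[OF edges_below_edge_list])

lemma index_pauli_Z_or_one:
  assumes "r < 2" "t < 2"
  shows "(if c = 1 then pauli_Z else 1\<^sub>m 2) $$ (r, t) = (if r = t then bit_sign (c * of_nat r) else 0)"
proof -
  have "r = 0 \<or> r = 1" "t = 0 \<or> t = 1" using assms by auto
  then show ?thesis by (cases c) (auto simp: pauli_Z_def mat_of_rows_list_def)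
qed

lemma Z_pow_eq_diag:
  assumes c: "c \<in> carrier_vec n"
  shows "Z_pow n c = mat (2 ^ n) (2 ^ n) (\<lambda>(i, i'). if i = i' then bit_sign (c \<bullet> bits_vec n i) else 0)"
proof (rule eq_matI)
  fix i i' assume "i < dim_row (mat (2 ^ n) (2 ^ n) (\<lambda>(i, i'). if i = i' then bit_sign (c \<bullet> bits_vec n i) else 0))"
    "i' < dim_col (mat (2 ^ n) (2 ^ n) (\<lambda>(i, i'). if i = i' then bit_sign (c \<bullet> bits_vec n i) else 0))"
  then have i: "i < 2 ^ n" and i': "i' < 2 ^ n" by auto
  have "Z_pow n c $$ (i, i') = (\<Prod>j<n. if qbit i j = qbit i' j then bit_sign (c $ j * of_nat (qbit i j)) else 0)"
    unfolding Z_pow_def using i i' by (simp add: tensor_ops_index index_pauli_Z_or_one)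
  also have "\<dots> = (if i = i' then bit_sign (c \<bullet> bits_vec n i) else 0)"
  proof (cases "i = i'")
    case True
    then show ?thesis by (simp add: scalar_prod_bits_vec[OF c] bit_sign_sum)
  next
    case False
    then obtain j where "j < n" "qbit i j \<noteq> qbit i' j" using qbit_eqI[OF i i'] by blast
    then show ?thesis using False by (auto intro!: prod_zero bexI[of _ j])
  qed
  finally show "Z_pow n c $$ (i, i') = mat (2 ^ n) (2 ^ n) (\<lambda>(i, i'). if i = i' then bit_sign (c \<bullet> bits_vec n i) else 0) $$ (i, i')"
    using i i' by simp
qed (auto simp: Z_pow_def)

definition graph_vec :: "nat \<Rightarrow> (nat \<times> nat) list \<Rightarrow> bit vec \<Rightarrow> complex vec" where
  "graph_vec n E c = vec (2 ^ n) (\<lambda>i. bit_sign (c \<bullet> bits_vec n i) * (bit_sign (edge_form E (bits_vec n i)) * amp n))"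

lemma graph_vec_carrier[simp]: "graph_vec n E c \<in> carrier_vec (2 ^ n)"
  by (simp add: graph_vec_def)

lemma dim_graph_vec[simp]: "dim_vec (graph_vec n E c) = 2 ^ n"
  by (simp add: graph_vec_def)

lemma Z_pow_mult_graph_state: "c \<in> carrier_vec n \<Longrightarrow> Z_pow n c *\<^sub>v graph_state n G = graph_vec n (edge_list n G) c"
  unfolding Z_pow_eq_diag graph_state_eq graph_vec_def by (subst diag_mat_mult_vec) auto

lemma inner_graph_vec:
  assumes c: "c \<in> carrier_vec n" and d: "d \<in> carrier_vec n"
  shows "(\<Sum>i<2 ^ n. cnj (graph_vec n E c $ i) * graph_vec n E d $ i) = (if c = d then 1 else 0)"
proof -
  have "(\<Sum>i<2 ^ n. cnj (graph_vec n E c $ i) * graph_vec n E d $ i) = (\<Sum>i<2 ^ n. bit_sign ((c + d) \<bullet> bits_vec n i) * (1 / 2 ^ n))"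
  proof (rule sum.cong[OF refl])
    fix i :: nat assume "i \<in> {..<2 ^ n}"
    then have i: "i < 2 ^ n" by simp
    have "(c + d) \<bullet> bits_vec n i = c \<bullet> bits_vec n i + d \<bullet> bits_vec n i"
      using c d by (simp add: add_scalar_prod_distrib[of _ n])
    then have "bit_sign ((c + d) \<bullet> bits_vec n i) = bit_sign (c \<bullet> bits_vec n i) * bit_sign (d \<bullet> bits_vec n i)"
      by (simp add: bit_sign_add)
    moreover have "cnj (graph_vec n E c $ i) * graph_vec n E d $ i
        = bit_sign (c \<bullet> bits_vec n i) * bit_sign (d \<bullet> bits_vec n i) * (bit_sign (edge_form E (bits_vec n i)) * bit_sign (edge_form E (bits_vec n i))) * (cnj (amp n) * amp n)"
      using i by (simp add: graph_vec_def ac_simps)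
    ultimately show "cnj (graph_vec n E c $ i) * graph_vec n E d $ i = bit_sign ((c + d) \<bullet> bits_vec n i) * (1 / 2 ^ n)"
      by (simp add: cnj_amp_mult_amp)
  qed
  also have "\<dots> = (\<Sum>i<2 ^ n. bit_sign ((c + d) \<bullet> bits_vec n i)) * (1 / 2 ^ n)"
    by (simp only: sum_distrib_right)
  also have "\<dots> = (if c = d then 1 else 0)"
    using sum_bit_sign_scalar_prod[of "c + d" n] c d bit_vec_add_eq_0_iff[OF c d] by simp
  finally show ?thesis .
qed

lemma sum_graph_vec_outer:
  assumes i: "i < 2 ^ n" and i': "i' < 2 ^ n"
  shows "(\<Sum>c<2 ^ n. graph_vec n E (bits_vec n c) $ i * cnj (graph_vec n E (bits_vec n c) $ i')) = (if i = i' then 1 else 0)"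
proof -
  let ?y = "bits_vec n i" and ?y' = "bits_vec n i'"
  have "(\<Sum>c<2 ^ n. graph_vec n E (bits_vec n c) $ i * cnj (graph_vec n E (bits_vec n c) $ i'))
      = (\<Sum>c<2 ^ n. bit_sign (bits_vec n c \<bullet> (?y + ?y'))) * (bit_sign (edge_form E ?y) * bit_sign (edge_form E ?y') * (1 / 2 ^ n))"
    unfolding sum_distrib_right
  proof (rule sum.cong[OF refl])
    fix c :: nat assume "c \<in> {..<2 ^ n}"
    have "bits_vec n c \<bullet> (?y + ?y') = bits_vec n c \<bullet> ?y + bits_vec n c \<bullet> ?y'"
      by (simp add: scalar_prod_add_distrib[of _ n])
    then have "bit_sign (bits_vec n c \<bullet> (?y + ?y')) = bit_sign (bits_vec n c \<bullet> ?y) * bit_sign (bits_vec n c \<bullet> ?y')"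
      by (simp add: bit_sign_add)
    moreover have "graph_vec n E (bits_vec n c) $ i * cnj (graph_vec n E (bits_vec n c) $ i')
        = (bit_sign (bits_vec n c \<bullet> ?y) * bit_sign (bits_vec n c \<bullet> ?y')) * (bit_sign (edge_form E ?y) * bit_sign (edge_form E ?y')) * (cnj (amp n) * amp n)"
      using i i' by (simp add: graph_vec_def ac_simps)
    ultimately show "graph_vec n E (bits_vec n c) $ i * cnj (graph_vec n E (bits_vec n c) $ i')
        = bit_sign (bits_vec n c \<bullet> (?y + ?y')) * (bit_sign (edge_form E ?y) * bit_sign (edge_form E ?y') * (1 / 2 ^ n))"
      by (simp only: cnj_amp_mult_amp mult.assoc)
  qed
  also have "\<dots> = (if i = i' then 1 else 0)"
  proof -
    have yy: "?y + ?y' \<in> carrier_vec n" by simp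
    have eq: "(?y + ?y' = 0\<^sub>v n) \<longleftrightarrow> i = i'"
      using bit_vec_add_eq_0_iff[of ?y n ?y'] bits_vec_inj[OF i i'] by auto
    have "(\<Sum>c<2 ^ n. bit_sign (bits_vec n c \<bullet> (?y + ?y'))) = (\<Sum>c<2 ^ n. bit_sign ((?y + ?y') \<bullet> bits_vec n c))"
      using comm_scalar_prod[OF bits_vec_carrier yy] by simp
    then show ?thesis
      using sum_bit_sign_scalar_prod[OF yy] eq by auto
  qed
  finally show ?thesis .
qed

lemma graph_vec_expansion:
  assumes r: "r \<in> carrier_vec (2 ^ n)" and i: "i < 2 ^ n"
  shows "r $ i = (\<Sum>c<2 ^ n. graph_vec n E (bits_vec n c) $ i *
      (\<Sum>i'<2 ^ n. cnj (graph_vec n E (bits_vec n c) $ i') * r $ i'))"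
proof -
  have "r $ i = (\<Sum>i'<2 ^ n. (if i = i' then 1 else 0) * r $ i')"
    using i by (simp add: if_distrib[of "\<lambda>x. x * _"] sum.delta cong: if_cong)
  also have "\<dots> = (\<Sum>i'<2 ^ n. (\<Sum>c<2 ^ n. graph_vec n E (bits_vec n c) $ i * cnj (graph_vec n E (bits_vec n c) $ i')) * r $ i')"
    using i sum_graph_vec_outer by (intro sum.cong refl) simp
  also have "\<dots> = (\<Sum>i'<2 ^ n. \<Sum>c<2 ^ n. graph_vec n E (bits_vec n c) $ i * (cnj (graph_vec n E (bits_vec n c) $ i') * r $ i'))"
    by (simp add: sum_distrib_right sum_distrib_left ac_simps)
  also have "\<dots> = (\<Sum>c<2 ^ n. graph_vec n E (bits_vec n c) $ i * (\<Sum>i'<2 ^ n. cnj (graph_vec n E (bits_vec n c) $ i') * r $ i'))"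
    by (subst sum.swap) (simp add: sum_distrib_left)
  finally show ?thesis .
qed

lemma eq_if_inner_graph_vecs_eq:
  assumes r: "r \<in> carrier_vec (2 ^ n)" and s: "s \<in> carrier_vec (2 ^ n)"
    and eq: "\<And>c. c < 2 ^ n \<Longrightarrow> (\<Sum>i<2 ^ n. cnj (graph_vec n E (bits_vec n c) $ i) * r $ i)
      = (\<Sum>i<2 ^ n. cnj (graph_vec n E (bits_vec n c) $ i) * s $ i)"
  shows "r = s"
proof (rule eq_vecI)
  fix i assume "i < dim_vec s"
  then have i: "i < 2 ^ n"
    using s by simp
  show "r $ i = s $ i"
    unfolding graph_vec_expansion[OF r i, where E = E] graph_vec_expansion[OF s i, where E = E]
    by (intro sum.cong refl) (simp add: eq)
qed (use r s in simp)

section \<open>Graph stabilizers\<close>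

definition bit_exp :: "bit vec \<Rightarrow> nat \<Rightarrow> nat" where
  "bit_exp x j = (if x $ j = 1 then 1 else 0)"

text \<open>\<open>P\<^sub>s = (-1)^(q(s)) X^s Z^(A s)\<close> with \<open>q = edge_form E\<close>; the sign makes \<open>s \<mapsto> P\<^sub>s\<close>
  multiplicative.\<close>

definition graph_pauli :: "nat \<Rightarrow> (nat \<times> nat) list \<Rightarrow> bit vec \<Rightarrow> complex mat" where
  "graph_pauli n E s = (\<i> ^ (2 * (if edge_form E s = 1 then 1 else 0))) \<cdot>\<^sub>m
     tensor_ops n (\<lambda>j. pauli_X ^\<^sub>m bit_exp s j * pauli_Z ^\<^sub>m bit_exp (adj_vec n E s) j)"

lemma graph_pauli_carrier[simp]: "graph_pauli n E s \<in> carrier_mat (2 ^ n) (2 ^ n)"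
  by (simp add: graph_pauli_def)

lemma dim_graph_pauli[simp]: "dim_row (graph_pauli n E s) = 2 ^ n" "dim_col (graph_pauli n E s) = 2 ^ n"
  by (simp_all add: graph_pauli_def)

lemma graph_pauli_in_pauli_group: "graph_pauli n E s \<in> pauli_group n"
  unfolding graph_pauli_def pauli_group_def by blast

lemma pauli_X_pow_bit: "pauli_X ^\<^sub>m (if \<alpha> = (1::bit) then 1 else 0) = (if \<alpha> = 1 then pauli_X else 1\<^sub>m 2)"
  by (cases \<alpha>) (auto simp: pauli_X_def mat_of_rows_list_def)

lemma pauli_Z_pow_bit: "pauli_Z ^\<^sub>m (if \<alpha> = (1::bit) then 1 else 0) = (if \<alpha> = 1 then pauli_Z else 1\<^sub>m 2)"
  by (cases \<alpha>) (auto simp: pauli_Z_def mat_of_rows_list_def)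

lemma index_mult_mat_2:
  assumes "A \<in> carrier_mat 2 2" "B \<in> carrier_mat 2 2" "r < 2" "t < 2"
  shows "(A * B) $$ (r, t) = A $$ (r, 0) * B $$ (0, t) + A $$ (r, 1) * B $$ (1, t)"
  using index_mult_mat_sum[OF assms] by (simp add: numeral_2_eq_2 lessThan_Suc add.commute)

lemma index_pauli_XZ_pow_bit:
  assumes r: "r < 2" and t: "t < 2"
  shows "(pauli_X ^\<^sub>m (if \<alpha> = (1::bit) then 1 else 0) * pauli_Z ^\<^sub>m (if \<beta> = (1::bit) then 1 else 0)) $$ (r, t)
     = (if (of_nat r :: bit) = of_nat t + \<alpha> then bit_sign (\<beta> * of_nat t) else 0)"
proof -
  have rr: "r = 0 \<or> r = 1" and tt: "t = 0 \<or> t = 1" using r t by auto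
  have c1: "(if \<alpha> = 1 then pauli_X else 1\<^sub>m 2) \<in> carrier_mat 2 2" by simp
  have c2: "(if \<beta> = 1 then pauli_Z else 1\<^sub>m 2) \<in> carrier_mat 2 2" by simp
  show ?thesis
    unfolding pauli_X_pow_bit pauli_Z_pow_bit index_mult_mat_2[OF c1 c2 r t]
    using rr tt by (cases \<alpha>; cases \<beta>) (auto simp: pauli_X_def pauli_Z_def mat_of_rows_list_def bit_sign_def)
qed

lemma prod_if_zero:
  fixes n :: nat
  shows "(\<Prod>j<n. if A j then f j else (0 :: 'a :: comm_semiring_1)) = (if \<forall>j<n. A j then \<Prod>j<n. f j else 0)"
proof (cases "\<forall>j<n. A j")
  case False
  then obtain j where j: "j < n" "\<not> A j" by blast
  have "(\<Prod>j<n. if A j then f j else (0 :: 'a)) = 0" by (rule prod_zero) (use j in auto)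
  then show ?thesis using False by (simp only: if_False)
qed simp

lemma i_pow_bit_sign: "\<i> ^ (2 * (if b = (1::bit) then 1 else 0)) = bit_sign b"
  by (cases b) (auto simp: bit_sign_def)

lemma index_graph_pauli:
  assumes s: "s \<in> carrier_vec n" and i: "i < 2 ^ n" and i': "i' < 2 ^ n"
  shows "graph_pauli n E s $$ (i, i') = (if bits_vec n i = bits_vec n i' + s
      then bit_sign (edge_form E s) * bit_sign (adj_vec n E s \<bullet> bits_vec n i') else 0)"
proof -
  have "tensor_ops n (\<lambda>j. pauli_X ^\<^sub>m bit_exp s j * pauli_Z ^\<^sub>m bit_exp (adj_vec n E s) j) $$ (i, i')
      = (\<Prod>j<n. if (of_nat (qbit i j) :: bit) = of_nat (qbit i' j) + s $ j
                then bit_sign (adj_vec n E s $ j * of_nat (qbit i' j)) else 0)"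
    using i i' by (simp add: tensor_ops_index bit_exp_def index_pauli_XZ_pow_bit)
  also have "\<dots> = (if \<forall>j<n. (of_nat (qbit i j) :: bit) = of_nat (qbit i' j) + s $ j
                then \<Prod>j<n. bit_sign (adj_vec n E s $ j * of_nat (qbit i' j)) else 0)"
    by (rule prod_if_zero)
  also have "(\<forall>j<n. (of_nat (qbit i j) :: bit) = of_nat (qbit i' j) + s $ j) \<longleftrightarrow> bits_vec n i = bits_vec n i' + s"
  proof
    assume "\<forall>j<n. (of_nat (qbit i j) :: bit) = of_nat (qbit i' j) + s $ j"
    then show "bits_vec n i = bits_vec n i' + s" using s by (intro eq_vecI) auto
  next
    assume h: "bits_vec n i = bits_vec n i' + s"
    show "\<forall>j<n. (of_nat (qbit i j) :: bit) = of_nat (qbit i' j) + s $ j"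
    proof (intro allI impI)
      fix j assume j: "j < n"
      have "bits_vec n i $ j = (bits_vec n i' + s) $ j" using h by simp
      then show "(of_nat (qbit i j) :: bit) = of_nat (qbit i' j) + s $ j" using j s by simp
    qed
  qed
  also have "(\<Prod>j<n. bit_sign (adj_vec n E s $ j * of_nat (qbit i' j))) = bit_sign (adj_vec n E s \<bullet> bits_vec n i')"
    by (simp add: scalar_prod_bits_vec[OF adj_vec_carrier] bit_sign_sum)
  finally show ?thesis unfolding graph_pauli_def using i i' by (simp add: i_pow_bit_sign)
qed

lemma graph_pauli_mult_vec_index:
  assumes s: "s \<in> carrier_vec n" and w: "w \<in> carrier_vec (2 ^ n)" and i: "i < 2 ^ n"
  shows "(graph_pauli n E s *\<^sub>v w) $ i = bit_sign (edge_form E s) * bit_sign (adj_vec n E s \<bullet> (bits_vec n i + s)) * w $ bits_index (bits_vec n i + s)"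
proof -
  let ?y = "bits_vec n i + s"
  have yc: "?y \<in> carrier_vec n" using s by simp
  have "(graph_pauli n E s *\<^sub>v w) $ i = (\<Sum>i'<2 ^ n. graph_pauli n E s $$ (i, i') * w $ i')"
    using i w by (simp add: scalar_prod_def atLeast0LessThan)
  also have "\<dots> = (\<Sum>i'<2 ^ n. if bits_vec n i' = ?y then bit_sign (edge_form E s) * bit_sign (adj_vec n E s \<bullet> bits_vec n i') * w $ i' else 0)"
  proof (rule sum.cong[OF refl])
    fix i' :: nat assume "i' \<in> {..<2 ^ n}"
    then have i': "i' < 2 ^ n" by simp
    have "(bits_vec n i = bits_vec n i' + s) \<longleftrightarrow> (bits_vec n i' = ?y)"
      using bit_vec_eq_add_iff[of "bits_vec n i" n "bits_vec n i'" s] s by simp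
    then show "graph_pauli n E s $$ (i, i') * w $ i' = (if bits_vec n i' = ?y then bit_sign (edge_form E s) * bit_sign (adj_vec n E s \<bullet> bits_vec n i') * w $ i' else 0)"
      using index_graph_pauli[OF s i i'] by simp
  qed
  also have "\<dots> = bit_sign (edge_form E s) * bit_sign (adj_vec n E s \<bullet> bits_vec n (bits_index ?y)) * w $ bits_index ?y"
    by (rule sum_bits_vec_delta[OF yc])
  finally show ?thesis using bits_vec_bits_index[OF yc] by simp
qed

lemma graph_pauli_mult_graph_vec:
  assumes E: "edges_below n E" and s: "s \<in> carrier_vec n" and c: "c \<in> carrier_vec n"
  shows "graph_pauli n E s *\<^sub>v graph_vec n E c = bit_sign (s \<bullet> c) \<cdot>\<^sub>v graph_vec n E c"
proof (rule eq_vecI)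
  fix i assume "i < dim_vec (bit_sign (s \<bullet> c) \<cdot>\<^sub>v graph_vec n E c)"
  then have i: "i < 2 ^ n" by simp
  let ?y = "bits_vec n i"
  let ?nb = "adj_vec n E s"
  have yc: "?y \<in> carrier_vec n" by simp
  have ysc: "?y + s \<in> carrier_vec n" using s by simp
  have vi: "bits_index (?y + s) < 2 ^ n" using bits_index_less[OF ysc] .
  have "(graph_pauli n E s *\<^sub>v graph_vec n E c) $ i = bit_sign (edge_form E s) * bit_sign (?nb \<bullet> (?y + s)) *
      (bit_sign (c \<bullet> (?y + s)) * (bit_sign (edge_form E (?y + s)) * amp n))"
    using graph_pauli_mult_vec_index[OF s graph_vec_carrier i] vi bits_vec_bits_index[OF ysc] by (simp add: graph_vec_def)
  also have "\<dots> = bit_sign (edge_form E s + (?nb \<bullet> (?y + s)) + (c \<bullet> (?y + s)) + edge_form E (?y + s)) * amp n"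
    by (simp add: bit_sign_add ac_simps)
  also have "edge_form E s + (?nb \<bullet> (?y + s)) + (c \<bullet> (?y + s)) + edge_form E (?y + s)
      = edge_form E s + (?y \<bullet> ?nb + s \<bullet> ?nb) + (c \<bullet> ?y + s \<bullet> c) + (edge_form E ?y + edge_form E s + ?y \<bullet> ?nb)"
  proof -
    have "?nb \<bullet> (?y + s) = ?nb \<bullet> ?y + ?nb \<bullet> s" using s by (simp add: scalar_prod_add_distrib[of _ n])
    moreover have "?nb \<bullet> ?y = ?y \<bullet> ?nb" by (rule comm_scalar_prod[of _ n]) auto
    moreover have "?nb \<bullet> s = s \<bullet> ?nb" using s by (intro comm_scalar_prod[of _ n]) auto
    moreover have "c \<bullet> (?y + s) = c \<bullet> ?y + c \<bullet> s" using s c by (simp add: scalar_prod_add_distrib[of _ n])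
    moreover have "c \<bullet> s = s \<bullet> c" using s c by (intro comm_scalar_prod[of _ n]) auto
    moreover have "edge_form E (?y + s) = edge_form E ?y + edge_form E s + ?y \<bullet> ?nb" by (rule edge_form_add[OF E yc s])
    ultimately show ?thesis by simp
  qed
  also have "\<dots> = s \<bullet> c + c \<bullet> ?y + edge_form E ?y"
  proof -
    have "(b::bit) + (p + 0) + (q + r) + (a + b + p) = r + q + a" for a b p q r
      by (cases a; cases b; cases p; cases q; cases r) (simp_all add: add_bit_eq_xor)
    then show ?thesis
      using scalar_prod_adj_vec_self[OF E s] by simp
  qed
  also have "bit_sign (s \<bullet> c + c \<bullet> ?y + edge_form E ?y) * amp n = (bit_sign (s \<bullet> c) \<cdot>\<^sub>v graph_vec n E c) $ i"
    using i by (simp add: graph_vec_def bit_sign_add ac_simps)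
  finally show "(graph_pauli n E s *\<^sub>v graph_vec n E c) $ i = (bit_sign (s \<bullet> c) \<cdot>\<^sub>v graph_vec n E c) $ i" .
qed simp

lemma bit_vec_add_eq_add_iff:
  assumes a: "a \<in> carrier_vec n" and b: "b \<in> carrier_vec n" and s: "s \<in> carrier_vec n" and t: "t \<in> carrier_vec n"
  shows "(a + s = b + t) \<longleftrightarrow> (a = b + (s + (t :: bit vec)))"
proof -
  have "(b + t = a + s) \<longleftrightarrow> (a = (b + t) + s)" using bit_vec_eq_add_iff[of "b + t" n a s] a b s t by simp
  moreover have "(b + t) + s = b + (s + t)" using b s t
    by (metis assoc_add_vec comm_add_vec)
  ultimately show ?thesis by auto
qed

lemma graph_pauli_phase_mult:
  assumes E: "edges_below n E" and s: "s \<in> carrier_vec n" and t: "t \<in> carrier_vec n" and z: "z \<in> carrier_vec n"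
  shows "edge_form E s + adj_vec n E s \<bullet> (z + t) + (edge_form E t + adj_vec n E t \<bullet> z)
    = edge_form E (s + t) + adj_vec n E (s + t) \<bullet> z"
proof -
  have "adj_vec n E s \<bullet> (z + t) = adj_vec n E s \<bullet> z + adj_vec n E s \<bullet> t"
    using z t by (simp add: scalar_prod_add_distrib[of _ n])
  moreover have "adj_vec n E s \<bullet> t = s \<bullet> adj_vec n E t"
    using t comm_scalar_prod[of "adj_vec n E s" n t] scalar_prod_adj_vec_sym[OF E s t] by simp
  moreover have "edge_form E (s + t) = edge_form E s + edge_form E t + s \<bullet> adj_vec n E t"
    by (rule edge_form_add[OF E s t])
  moreover have "adj_vec n E (s + t) \<bullet> z = adj_vec n E s \<bullet> z + adj_vec n E t \<bullet> z"
    using adj_vec_add[OF s t E] z by (simp add: add_scalar_prod_distrib[of _ n])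
  ultimately show ?thesis
    by (simp add: ac_simps)
qed

lemma graph_pauli_mult:
  assumes E: "edges_below n E" and s: "s \<in> carrier_vec n" and t: "t \<in> carrier_vec n"
  shows "graph_pauli n E s * graph_pauli n E t = graph_pauli n E (s + t)"
proof (rule eq_matI)
  fix i i'' assume "i < dim_row (graph_pauli n E (s + t))" "i'' < dim_col (graph_pauli n E (s + t))"
  then have i: "i < 2 ^ n" and i'': "i'' < 2 ^ n" by auto
  let ?y = "bits_vec n i" and ?z = "bits_vec n i''"
  have yc: "?y \<in> carrier_vec n" and zc: "?z \<in> carrier_vec n" by auto
  have ysc: "?y + s \<in> carrier_vec n" using s by simp
  have vi: "bits_index (?y + s) < 2 ^ n" using bits_index_less[OF ysc] .
  have colc: "col (graph_pauli n E t) i'' \<in> carrier_vec (2 ^ n)" by (rule carrier_vecI) simp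
  have "(graph_pauli n E s * graph_pauli n E t) $$ (i, i'') = (graph_pauli n E s *\<^sub>v col (graph_pauli n E t) i'') $ i"
    using i i'' by simp
  also have "\<dots> = bit_sign (edge_form E s) * bit_sign (adj_vec n E s \<bullet> (?y + s))
      * graph_pauli n E t $$ (bits_index (?y + s), i'')"
    using graph_pauli_mult_vec_index[OF s colc i] vi i'' by simp
  also have "\<dots> = (if ?y + s = ?z + t then bit_sign (edge_form E s) * bit_sign (adj_vec n E s \<bullet> (?y + s))
      * (bit_sign (edge_form E t) * bit_sign (adj_vec n E t \<bullet> ?z)) else 0)"
    using index_graph_pauli[OF t vi i''] bits_vec_bits_index[OF ysc] by simp
  also have "\<dots> = graph_pauli n E (s + t) $$ (i, i'')"
  proof (cases "?y + s = ?z + t")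
    case True
    then have "bit_sign (edge_form E s) * bit_sign (adj_vec n E s \<bullet> (?y + s))
        * (bit_sign (edge_form E t) * bit_sign (adj_vec n E t \<bullet> ?z))
        = bit_sign (edge_form E (s + t)) * bit_sign (adj_vec n E (s + t) \<bullet> ?z)"
      using graph_pauli_phase_mult[OF E s t zc] by (metis bit_sign_add mult.assoc)
    moreover have "?y = ?z + (s + t)"
      using True bit_vec_add_eq_add_iff[OF yc zc s t] by simp
    ultimately show ?thesis
      using True index_graph_pauli[of "s + t" n i i'' E] s t i i'' by simp
  next
    case False
    then have "?y \<noteq> ?z + (s + t)"
      using bit_vec_add_eq_add_iff[OF yc zc s t] by simp
    then show ?thesis
      using False index_graph_pauli[of "s + t" n i i'' E] s t i i'' by simp
  qed
  finally show "(graph_pauli n E s * graph_pauli n E t) $$ (i, i'') = graph_pauli n E (s + t) $$ (i, i'')" .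
qed auto

lemma graph_pauli_inj:
  assumes s: "s \<in> carrier_vec n" and t: "t \<in> carrier_vec n" and eq: "graph_pauli n E s = graph_pauli n E t"
  shows "s = t"
proof (rule ccontr)
  assume ne: "s \<noteq> t"
  have vs: "bits_index s < 2 ^ n" using bits_index_less[OF s] .
  have z: "(0::nat) < 2 ^ n" by simp
  have bs: "bits_vec n (bits_index s) = bits_vec n 0 + s"
    using bits_vec_bits_index[OF s] bits_vec_0 s by simp
  have "graph_pauli n E s $$ (bits_index s, 0) \<noteq> 0"
    using index_graph_pauli[OF s vs z] bs by simp
  moreover have "graph_pauli n E t $$ (bits_index s, 0) = 0"
  proof -
    have "bits_vec n (bits_index s) \<noteq> bits_vec n 0 + t"
      using bits_vec_bits_index[OF s] bits_vec_0 t ne by simp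
    then show ?thesis using index_graph_pauli[OF t vs z] by simp
  qed
  ultimately show False using eq by simp
qed

lemma graph_pauli_zero:
  assumes E: "edges_below n E"
  shows "graph_pauli n E (0\<^sub>v n) = 1\<^sub>m (2 ^ n)"
proof (rule eq_matI)
  fix i i' assume "i < dim_row (1\<^sub>m (2 ^ n) :: complex mat)" "i' < dim_col (1\<^sub>m (2 ^ n) :: complex mat)"
  then have i: "i < 2 ^ n" and i': "i' < 2 ^ n" by auto
  have "(bits_vec n i = bits_vec n i' + 0\<^sub>v n) \<longleftrightarrow> i = i'"
    using bits_vec_inj[OF i i'] by auto
  then show "graph_pauli n E (0\<^sub>v n) $$ (i, i') = (1\<^sub>m (2 ^ n) :: complex mat) $$ (i, i')"
    using index_graph_pauli[of "0\<^sub>v n" n i i' E] i i' edge_form_zero[OF E] adj_vec_zero[OF E] by simp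
qed auto

lemma index_graph_pauli_sym:
  assumes E: "edges_below n E" and s: "s \<in> carrier_vec n" and i: "i < 2 ^ n" and i': "i' < 2 ^ n"
  shows "graph_pauli n E s $$ (i, i') = graph_pauli n E s $$ (i', i)"
proof -
  have sw: "(bits_vec n i = bits_vec n i' + s) \<longleftrightarrow> (bits_vec n i' = bits_vec n i + s)"
    using bit_vec_eq_add_iff[of "bits_vec n i" n "bits_vec n i'" s] s by simp
  show ?thesis
  proof (cases "bits_vec n i = bits_vec n i' + s")
    case True
    have "adj_vec n E s \<bullet> bits_vec n i = adj_vec n E s \<bullet> bits_vec n i' + adj_vec n E s \<bullet> s"
      using True s by (simp add: scalar_prod_add_distrib[of _ n])
    moreover have "adj_vec n E s \<bullet> s = s \<bullet> adj_vec n E s" using s by (intro comm_scalar_prod[of _ n]) auto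
    ultimately have "adj_vec n E s \<bullet> bits_vec n i = adj_vec n E s \<bullet> bits_vec n i'"
      using scalar_prod_adj_vec_self[OF E s] by simp
    then show ?thesis using True sw index_graph_pauli[OF s i i'] index_graph_pauli[OF s i' i] by simp
  next
    case False
    then show ?thesis using sw index_graph_pauli[OF s i i'] index_graph_pauli[OF s i' i] by simp
  qed
qed

lemma cnj_index_graph_pauli:
  assumes s: "s \<in> carrier_vec n" and i: "i < 2 ^ n" and i': "i' < 2 ^ n"
  shows "cnj (graph_pauli n E s $$ (i, i')) = graph_pauli n E s $$ (i, i')"
  using index_graph_pauli[OF s i i'] by simp

lemma inner_graph_vec_graph_pauli:
  assumes E: "edges_below n E" and s: "s \<in> carrier_vec n" and c: "c \<in> carrier_vec n" and v: "v \<in> carrier_vec (2 ^ n)"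
  shows "(\<Sum>i<2 ^ n. cnj (graph_vec n E c $ i) * (graph_pauli n E s *\<^sub>v v) $ i) = bit_sign (s \<bullet> c) * (\<Sum>i<2 ^ n. cnj (graph_vec n E c $ i) * v $ i)"
proof -
  have "(\<Sum>i<2 ^ n. cnj (graph_vec n E c $ i) * (graph_pauli n E s *\<^sub>v v) $ i)
      = (\<Sum>i<2 ^ n. \<Sum>i'<2 ^ n. cnj (graph_vec n E c $ i) * (graph_pauli n E s $$ (i, i') * v $ i'))"
    using v by (intro sum.cong refl) (simp add: scalar_prod_def atLeast0LessThan sum_distrib_left)
  also have "\<dots> = (\<Sum>i'<2 ^ n. \<Sum>i<2 ^ n. cnj (graph_vec n E c $ i) * (graph_pauli n E s $$ (i, i') * v $ i'))"
    by (rule sum.swap)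
  also have "\<dots> = (\<Sum>i'<2 ^ n. cnj ((graph_pauli n E s *\<^sub>v graph_vec n E c) $ i') * v $ i')"
  proof (rule sum.cong[OF refl])
    fix i' :: nat assume "i' \<in> {..<2 ^ n}"
    then have i': "i' < 2 ^ n" by simp
    have "cnj ((graph_pauli n E s *\<^sub>v graph_vec n E c) $ i') = (\<Sum>i<2 ^ n. cnj (graph_pauli n E s $$ (i', i)) * cnj (graph_vec n E c $ i))"
      using i' by (simp add: scalar_prod_def atLeast0LessThan)
    also have "\<dots> = (\<Sum>i<2 ^ n. graph_pauli n E s $$ (i, i') * cnj (graph_vec n E c $ i))"
      using cnj_index_graph_pauli[OF s i'] index_graph_pauli_sym[OF E s _ i'] by (intro sum.cong refl) auto
    finally show "(\<Sum>i<2 ^ n. cnj (graph_vec n E c $ i) * (graph_pauli n E s $$ (i, i') * v $ i')) = cnj ((graph_pauli n E s *\<^sub>v graph_vec n E c) $ i') * v $ i'"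
      by (simp add: sum_distrib_left sum_distrib_right ac_simps)
  qed
  also have "\<dots> = (\<Sum>i'<2 ^ n. bit_sign (s \<bullet> c) * (cnj (graph_vec n E c $ i') * v $ i'))"
    using graph_pauli_mult_graph_vec[OF E s c] by (intro sum.cong refl) simp
  also have "\<dots> = bit_sign (s \<bullet> c) * (\<Sum>i<2 ^ n. cnj (graph_vec n E c $ i) * v $ i)"
    by (simp add: sum_distrib_left)
  finally show ?thesis .
qed

text \<open>\<open>P\<^sub>t\<close> fixes the graph state \<open>Z\<^sup>0|G\<rangle>\<close>, so it is never \<open>-I\<close>.\<close>

lemma graph_pauli_neq_minus_one:
  assumes E: "edges_below n E" and t: "t \<in> carrier_vec n"
  shows "graph_pauli n E t \<noteq> - 1\<^sub>m (2 ^ n)"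
proof
  let ?g = "graph_vec n E (0\<^sub>v n)"
  assume minus_one: "graph_pauli n E t = - 1\<^sub>m (2 ^ n)"
  have "graph_pauli n E t *\<^sub>v ?g = ?g"
    using graph_pauli_mult_graph_vec[OF E t, of "0\<^sub>v n"] t by simp
  then have "(- ?g) $ 0 = ?g $ 0"
    using minus_one by simp
  then have "?g $ 0 = 0"
    by simp
  then show False
    by (simp add: graph_vec_def amp_def)
qed

section \<open>The graph encoder\<close>

definition row_comb :: "nat \<Rightarrow> bit mat \<Rightarrow> nat \<Rightarrow> bit vec" where
  "row_comb k \<Gamma> x = transpose_mat \<Gamma> *\<^sub>v bits_vec k x"

lemma row_comb_carrier: "\<Gamma> \<in> carrier_mat k n \<Longrightarrow> row_comb k \<Gamma> x \<in> carrier_vec n"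
  unfolding row_comb_def by (rule carrier_vecI) simp

lemma graph_encoder_eq:
  assumes \<Gamma>: "\<Gamma> \<in> carrier_mat k n"
  shows "graph_encoder n k G \<Gamma> = mat (2 ^ n) (2 ^ k) (\<lambda>(i, x). graph_vec n (edge_list n G) (row_comb k \<Gamma> x) $ i)"
  unfolding graph_encoder_def using row_comb_carrier[OF \<Gamma>]
  by (intro eq_matI) (auto simp: Z_pow_mult_graph_state mat_of_cols_index row_comb_def)

lemma graph_encoder_carrier:
  assumes \<Gamma>: "\<Gamma> \<in> carrier_mat k n"
  shows "graph_encoder n k G \<Gamma> \<in> carrier_mat (2 ^ n) (2 ^ k)"
  unfolding graph_encoder_eq[OF \<Gamma>] by simp

lemma col_graph_encoder:
  assumes \<Gamma>: "\<Gamma> \<in> carrier_mat k n" and x: "x < 2 ^ k"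
  shows "col (graph_encoder n k G \<Gamma>) x = graph_vec n (edge_list n G) (row_comb k \<Gamma> x)"
  unfolding graph_encoder_eq[OF \<Gamma>] using x by (intro eq_vecI) auto

lemma adjoint_graph_encoder_mult:
  assumes \<Gamma>: "\<Gamma> \<in> carrier_mat k n"
  shows "mat_adjoint (graph_encoder n k G \<Gamma>) * graph_encoder n k G \<Gamma>
      = mat (2 ^ k) (2 ^ k) (\<lambda>(x, y). if row_comb k \<Gamma> x = row_comb k \<Gamma> y then 1 else 0)"
proof (rule eq_matI)
  let ?EG = "graph_encoder n k G \<Gamma>"
  have EG: "?EG \<in> carrier_mat (2 ^ n) (2 ^ k)"
    by (rule graph_encoder_carrier[OF \<Gamma>])
  fix x y assume "x < dim_row (mat (2 ^ k) (2 ^ k) (\<lambda>(x, y). if row_comb k \<Gamma> x = row_comb k \<Gamma> y then 1 else (0::complex)))"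
    "y < dim_col (mat (2 ^ k) (2 ^ k) (\<lambda>(x, y). if row_comb k \<Gamma> x = row_comb k \<Gamma> y then 1 else (0::complex)))"
  then have x: "x < 2 ^ k" and y: "y < 2 ^ k" by auto
  have "(mat_adjoint ?EG * ?EG) $$ (x, y) = (\<Sum>i<2 ^ n. mat_adjoint ?EG $$ (x, i) * ?EG $$ (i, y))"
    by (rule index_mult_mat_sum[OF mat_adjoint_carrier[OF EG] EG x y])
  also have "\<dots> = (\<Sum>i<2 ^ n. cnj (graph_vec n (edge_list n G) (row_comb k \<Gamma> x) $ i)
      * graph_vec n (edge_list n G) (row_comb k \<Gamma> y) $ i)"
    using x y EG by (intro sum.cong refl) (simp add: index_mat_adjoint graph_encoder_eq[OF \<Gamma>])
  also have "\<dots> = (if row_comb k \<Gamma> x = row_comb k \<Gamma> y then 1 else 0)"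
    by (rule inner_graph_vec[OF row_comb_carrier[OF \<Gamma>] row_comb_carrier[OF \<Gamma>]])
  finally show "(mat_adjoint ?EG * ?EG) $$ (x, y)
      = mat (2 ^ k) (2 ^ k) (\<lambda>(x, y). if row_comb k \<Gamma> x = row_comb k \<Gamma> y then 1 else (0::complex)) $$ (x, y)"
    using x y by simp
qed (use graph_encoder_carrier[OF \<Gamma>] in auto)

text \<open>A multiple of the identity has zero off-diagonal entries, while a nonzero \<open>x\<close> with
  \<open>x\<Gamma> = 0\<close> makes the entry \<open>(x, 0)\<close> of \<open>E\<^sup>\<dagger>E\<close> equal to \<open>1\<close>.\<close>

lemma graph_encoder_scalar_isometry_imp_full_rank:
  assumes \<Gamma>: "\<Gamma> \<in> carrier_mat k n"
    and iso: "mat_adjoint (graph_encoder n k G \<Gamma>) * graph_encoder n k G \<Gamma> = c \<cdot>\<^sub>m 1\<^sub>m (2 ^ k)"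
  shows "vec_space.rank k \<Gamma> = k"
proof (rule ccontr)
  assume "vec_space.rank k \<Gamma> \<noteq> k"
  then obtain x where x: "x \<in> carrier_vec k" "x \<noteq> 0\<^sub>v k" "transpose_mat \<Gamma> *\<^sub>v x = 0\<^sub>v n"
    using rank_deficient_imp_left_kernel[OF \<Gamma>] by blast
  have i: "bits_index x < 2 ^ k" and bits: "bits_vec k (bits_index x) = x"
    using bits_index_less[OF x(1)] bits_vec_bits_index[OF x(1)] by auto
  have "bits_index x \<noteq> 0"
    using bits x(2) bits_vec_0 by auto
  moreover have "row_comb k \<Gamma> (bits_index x) = row_comb k \<Gamma> 0"
    using x(3) \<Gamma> by (auto simp: row_comb_def bits bits_vec_0)
  ultimately show False
    using arg_cong[OF iso, of "\<lambda>M. M $$ (bits_index x, 0)"] i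
    by (simp add: adjoint_graph_encoder_mult[OF \<Gamma>])
qed

lemma inner_graph_vec_graph_encoder:
  assumes \<Gamma>: "\<Gamma> \<in> carrier_mat k n" and c: "c \<in> carrier_vec n" and w: "w \<in> carrier_vec (2 ^ k)"
  shows "(\<Sum>i<2 ^ n. cnj (graph_vec n (edge_list n G) c $ i) * (graph_encoder n k G \<Gamma> *\<^sub>v w) $ i)
    = (\<Sum>x<2 ^ k. if c = row_comb k \<Gamma> x then w $ x else 0)"
proof -
  let ?g = "graph_vec n (edge_list n G)"
  have "(\<Sum>i<2 ^ n. cnj (?g c $ i) * (graph_encoder n k G \<Gamma> *\<^sub>v w) $ i)
      = (\<Sum>i<2 ^ n. \<Sum>x<2 ^ k. cnj (?g c $ i) * (?g (row_comb k \<Gamma> x) $ i * w $ x))"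
    using w by (intro sum.cong refl) (simp add: graph_encoder_eq[OF \<Gamma>] scalar_prod_def atLeast0LessThan sum_distrib_left)
  also have "\<dots> = (\<Sum>x<2 ^ k. \<Sum>i<2 ^ n. cnj (?g c $ i) * (?g (row_comb k \<Gamma> x) $ i * w $ x))"
    by (rule sum.swap)
  also have "\<dots> = (\<Sum>x<2 ^ k. (\<Sum>i<2 ^ n. cnj (?g c $ i) * ?g (row_comb k \<Gamma> x) $ i) * w $ x)"
    by (simp add: sum_distrib_right sum_distrib_left ac_simps)
  also have "\<dots> = (\<Sum>x<2 ^ k. if c = row_comb k \<Gamma> x then w $ x else 0)"
    using inner_graph_vec[OF c row_comb_carrier[OF \<Gamma>]] by (intro sum.cong refl) simp
  finally show ?thesis .
qed

section \<open>The stabilizer code of a graph encoder\<close>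

locale graph_code = pivot_cols \<Gamma> k n piv Binv for \<Gamma> :: "bit mat" and k n piv Binv +
  fixes G :: "bit mat"
begin

lemma row_comb_inj:
  assumes x: "x < 2 ^ k" and y: "y < 2 ^ k" and eq: "row_comb k \<Gamma> x = row_comb k \<Gamma> y"
  shows "x = y"
proof -
  have "transpose_mat \<Gamma> *\<^sub>v (bits_vec k x + bits_vec k y) = row_comb k \<Gamma> x + row_comb k \<Gamma> y"
    unfolding row_comb_def using carrier by (intro mult_add_distrib_mat_vec) auto
  also have "\<dots> = 0\<^sub>v n"
    using eq bit_vec_add_eq_0_iff[OF row_comb_carrier[OF carrier] row_comb_carrier[OF carrier]] by simp
  finally have "bits_vec k x + bits_vec k y = 0\<^sub>v k"
    using transpose_mult_vec_eq_0_iff[of "bits_vec k x + bits_vec k y"] by simp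
  then show ?thesis
    using bit_vec_add_eq_0_iff[of "bits_vec k x" k "bits_vec k y"] bits_vec_inj[OF x y] by simp
qed

lemma graph_encoder_isometry:
  "mat_adjoint (graph_encoder n k G \<Gamma>) * graph_encoder n k G \<Gamma> = 1\<^sub>m (2 ^ k)"
  unfolding adjoint_graph_encoder_mult[OF carrier] using row_comb_inj by (intro eq_matI) auto

text \<open>The stabilizer group is \<open>{P\<^sub>t | \<Gamma> t = 0}\<close>, generated by the \<open>P\<^sub>t\<close> for the kernel basis.\<close>

definition stabilizer_gens :: "complex mat list" where
  "stabilizer_gens = map (\<lambda>m. graph_pauli n (edge_list n G) (kernel_vec m)) free_cols"

lemma gen_group_graph_paulis:
  assumes A: "A \<subseteq> set free_cols" and M: "M \<in> gen_group n ((\<lambda>m. graph_pauli n (edge_list n G) (kernel_vec m)) ` A)"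
  obtains t where "t \<in> carrier_vec n" "M = graph_pauli n (edge_list n G) t" "\<Gamma> *\<^sub>v t = 0\<^sub>v k"
    "\<And>m. m \<in> set free_cols - A \<Longrightarrow> t $ m = 0"
proof -
  let ?E = "edge_list n G"
  from M have "\<exists>t \<in> carrier_vec n. M = graph_pauli n ?E t \<and> \<Gamma> *\<^sub>v t = 0\<^sub>v k \<and> (\<forall>m \<in> set free_cols - A. t $ m = 0)"
  proof (induction rule: gen_group.induct)
    case gen_one
    show ?case
      using graph_pauli_zero[OF edges_below_edge_list] carrier set_free_cols
      by (intro bexI[of _ "0\<^sub>v n"]) auto
  next
    case (gen_mult g h)
    obtain m where m: "m \<in> A" "g = graph_pauli n ?E (kernel_vec m)"
      using gen_mult(1) by blast
    obtain t where t: "t \<in> carrier_vec n" "h = graph_pauli n ?E t" "\<Gamma> *\<^sub>v t = 0\<^sub>v k"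
      "\<forall>m' \<in> set free_cols - A. t $ m' = 0"
      using gen_mult(3) by blast
    have "m < n"
      using m A set_free_cols by auto
    have "g * h = graph_pauli n ?E (kernel_vec m + t)"
      using m t graph_pauli_mult[OF edges_below_edge_list kernel_vec_carrier t(1)] by simp
    moreover have "\<Gamma> *\<^sub>v (kernel_vec m + t) = 0\<^sub>v k"
      using mult_add_distrib_mat_vec[OF carrier kernel_vec_carrier t(1)] kernel_vec_in_kernel[OF \<open>m < n\<close>] t(3)
      by simp
    moreover have "(kernel_vec m + t) $ m' = 0" if "m' \<in> set free_cols - A" for m'
      using that m(1) kernel_vec_free_index[of m' m] t(1,4) set_free_cols by auto
    ultimately show ?case
      using t(1) by (intro bexI[of _ "kernel_vec m + t"]) auto
  qed
  then show ?thesis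
    using that by blast
qed

lemma set_stabilizer_gens:
  "set stabilizer_gens = (\<lambda>m. graph_pauli n (edge_list n G) (kernel_vec m)) ` set free_cols"
  by (simp add: stabilizer_gens_def)

lemma graph_pauli_kernel_vec_inj: "inj_on (\<lambda>m. graph_pauli n (edge_list n G) (kernel_vec m)) (set free_cols)"
proof (rule inj_onI)
  fix m m' assume m: "m \<in> set free_cols" and "m' \<in> set free_cols"
    and "graph_pauli n (edge_list n G) (kernel_vec m) = graph_pauli n (edge_list n G) (kernel_vec m')"
  then have "kernel_vec m $ m = kernel_vec m' $ m"
    using graph_pauli_inj[OF kernel_vec_carrier kernel_vec_carrier] by metis
  then show "m = m'"
    using kernel_vec_free_index[OF m] by (auto split: if_splits)
qed

text \<open>Independence: \<open>P\<^bsub>v\<^sub>m\<^esub>\<close> cannot lie in the group generated by the other generators,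
  whose elements \<open>P\<^sub>t\<close> all have \<open>t\<^sub>m = 0\<close>, whereas \<open>(v\<^sub>m)\<^sub>m = 1\<close>.\<close>

lemma stabilizer_gens_independent:
  assumes i: "i < length stabilizer_gens"
  shows "stabilizer_gens ! i \<notin> gen_group n (set stabilizer_gens - {stabilizer_gens ! i})"
proof
  let ?P = "\<lambda>m. graph_pauli n (edge_list n G) (kernel_vec m)"
  let ?m = "free_cols ! i"
  have m: "?m \<in> set free_cols" and gi: "stabilizer_gens ! i = ?P ?m"
    using i by (simp_all add: stabilizer_gens_def)
  have "set stabilizer_gens - {stabilizer_gens ! i} = ?P ` (set free_cols - {?m})"
    unfolding set_stabilizer_gens gi using inj_on_image_set_diff[OF graph_pauli_kernel_vec_inj, of "{?m}"] m
    by auto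
  moreover assume "stabilizer_gens ! i \<in> gen_group n (set stabilizer_gens - {stabilizer_gens ! i})"
  ultimately have "?P ?m \<in> gen_group n (?P ` (set free_cols - {?m}))"
    using gi by simp
  then obtain t where t: "t \<in> carrier_vec n" "?P ?m = graph_pauli n (edge_list n G) t" "\<Gamma> *\<^sub>v t = 0\<^sub>v k"
      "\<And>m'. m' \<in> set free_cols - (set free_cols - {?m}) \<Longrightarrow> t $ m' = 0"
    by (rule gen_group_graph_paulis[OF Diff_subset]) blast
  then have "kernel_vec ?m = t"
    using graph_pauli_inj[OF kernel_vec_carrier t(1)] by blast
  moreover have "kernel_vec ?m $ ?m = 1" "t $ ?m = 0"
    using kernel_vec_free_index[OF m] t(4) m by simp_all
  ultimately show False
    by simp
qed

lemma stabilizer_group_code: "stabilizer_group n k (gen_group n (set stabilizer_gens))"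
proof -
  have elem: "\<exists>t \<in> carrier_vec n. M = graph_pauli n (edge_list n G) t"
    if "M \<in> gen_group n (set stabilizer_gens)" for M
    using gen_group_graph_paulis[of "set free_cols" M] that unfolding set_stabilizer_gens by blast
  have "g * h = h * g" if "g \<in> gen_group n (set stabilizer_gens)" "h \<in> gen_group n (set stabilizer_gens)" for g h
    using elem[OF that(1)] elem[OF that(2)] graph_pauli_mult[OF edges_below_edge_list]
    by (metis comm_add_vec)
  moreover have "- 1\<^sub>m (2 ^ n) \<notin> gen_group n (set stabilizer_gens)"
    using elem graph_pauli_neq_minus_one[OF edges_below_edge_list] by metis
  ultimately show ?thesis
    unfolding stabilizer_group_def using stabilizer_gens_independent length_free_cols graph_pauli_in_pauli_group
    by (intro conjI exI[of _ stabilizer_gens]) (auto simp: stabilizer_gens_def)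
qed

end

context graph_code
begin

lemma graph_pauli_mult_graph_encoder:
  assumes t: "t \<in> carrier_vec n" and kernel: "\<Gamma> *\<^sub>v t = 0\<^sub>v k"
  shows "graph_pauli n (edge_list n G) t * graph_encoder n k G \<Gamma> = graph_encoder n k G \<Gamma>"
proof (rule eq_matI)
  let ?EG = "graph_encoder n k G \<Gamma>"
  have EG: "?EG \<in> carrier_mat (2 ^ n) (2 ^ k)"
    by (rule graph_encoder_carrier[OF carrier])
  fix i x assume "i < dim_row ?EG" "x < dim_col ?EG"
  then have i: "i < 2 ^ n" and x: "x < 2 ^ k"
    using EG by auto
  have "t \<bullet> row_comb k \<Gamma> x = bits_vec k x \<bullet> (\<Gamma> *\<^sub>v t)"
    using transpose_vec_mult_scalar[OF carrier t bits_vec_carrier] comm_scalar_prod[OF t row_comb_carrier[OF carrier]]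
    by (simp add: row_comb_def)
  also have "\<dots> = 0"
    using kernel by (simp add: scalar_prod_def)
  finally have "(graph_pauli n (edge_list n G) t *\<^sub>v col ?EG x) = col ?EG x"
    using col_graph_encoder[OF carrier x] graph_pauli_mult_graph_vec[OF edges_below_edge_list t row_comb_carrier[OF carrier]]
    by simp
  moreover have "(graph_pauli n (edge_list n G) t * ?EG) $$ (i, x) = (graph_pauli n (edge_list n G) t *\<^sub>v col ?EG x) $ i"
    using i x EG by simp
  ultimately show "(graph_pauli n (edge_list n G) t * ?EG) $$ (i, x) = ?EG $$ (i, x)"
    using i x EG by simp
qed (use graph_encoder_carrier[OF carrier, where G = G] in \<open>auto dest: carrier_matD\<close>)

lemma range_graph_encoder_subset_codespace:
  "{graph_encoder n k G \<Gamma> *\<^sub>v w | w. w \<in> carrier_vec (2 ^ k)} \<subseteq> codespace n (gen_group n (set stabilizer_gens))"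
proof
  let ?EG = "graph_encoder n k G \<Gamma>"
  have EG: "?EG \<in> carrier_mat (2 ^ n) (2 ^ k)"
    by (rule graph_encoder_carrier[OF carrier])
  fix u assume "u \<in> {?EG *\<^sub>v w | w. w \<in> carrier_vec (2 ^ k)}"
  then obtain w where w: "w \<in> carrier_vec (2 ^ k)" "u = ?EG *\<^sub>v w"
    by blast
  have "s *\<^sub>v u = u" if "s \<in> gen_group n (set stabilizer_gens)" for s
  proof -
    have "s \<in> gen_group n ((\<lambda>m. graph_pauli n (edge_list n G) (kernel_vec m)) ` set free_cols)"
      using that by (simp add: set_stabilizer_gens)
    then obtain t where t: "t \<in> carrier_vec n" "s = graph_pauli n (edge_list n G) t" "\<Gamma> *\<^sub>v t = 0\<^sub>v k"
      by (rule gen_group_graph_paulis[OF subset_refl]) blast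
    have "s *\<^sub>v u = (graph_pauli n (edge_list n G) t * ?EG) *\<^sub>v w"
      using t(2) w by (simp add: assoc_mult_mat_vec[OF graph_pauli_carrier EG w(1)])
    then show ?thesis
      using graph_pauli_mult_graph_encoder[OF t(1,3)] w(2) by simp
  qed
  then show "u \<in> codespace n (gen_group n (set stabilizer_gens))"
    using w EG by (simp add: codespace_def)
qed

text \<open>A codeword has no component along \<open>Z\<^sup>c|G\<rangle>\<close> unless \<open>c\<close> lies in the row space of
  \<open>\<Gamma>\<close>: otherwise some kernel vector \<open>v\<^sub>m\<close> has \<open>v\<^sub>m \<cdot> c = 1\<close>, and the stabilizer
  \<open>P\<^bsub>v\<^sub>m\<^esub>\<close> flips the sign of that component.\<close>

lemma codespace_inner_graph_vec_eq_0:
  assumes u: "u \<in> codespace n (gen_group n (set stabilizer_gens))"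
    and c: "c \<in> carrier_vec n" and not_row: "\<And>x. x < 2 ^ k \<Longrightarrow> c \<noteq> row_comb k \<Gamma> x"
  shows "(\<Sum>i<2 ^ n. cnj (graph_vec n (edge_list n G) c $ i) * u $ i) = 0"
proof -
  let ?P = "\<lambda>m. graph_pauli n (edge_list n G) (kernel_vec m)"
  let ?ip = "\<lambda>v. \<Sum>i<2 ^ n. cnj (graph_vec n (edge_list n G) c $ i) * v $ i"
  have "\<exists>m \<in> set free_cols. kernel_vec m \<bullet> c \<noteq> 0"
  proof (rule ccontr)
    assume "\<not> (\<exists>m \<in> set free_cols. kernel_vec m \<bullet> c \<noteq> 0)"
    then obtain x where x: "x \<in> carrier_vec k" "c = transpose_mat \<Gamma> *\<^sub>v x"
      using orthogonal_kernel_vecs_imp_row_space[OF c] by blast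
    have "c = row_comb k \<Gamma> (bits_index x)"
      using x bits_vec_bits_index[OF x(1)] by (simp add: row_comb_def)
    then show False
      using not_row bits_index_less[OF x(1)] by blast
  qed
  then obtain m where m: "m \<in> set free_cols" "kernel_vec m \<bullet> c = 1"
    by auto
  have "?P m \<in> set stabilizer_gens"
    using m(1) set_stabilizer_gens by auto
  then have "?P m * 1\<^sub>m (2 ^ n) \<in> gen_group n (set stabilizer_gens)"
    by (rule gen_group.gen_mult[OF _ gen_group.gen_one])
  then have "?P m *\<^sub>v u = u"
    using u by (simp add: codespace_def)
  moreover have "?ip (?P m *\<^sub>v u) = bit_sign (kernel_vec m \<bullet> c) * ?ip u"
    using u by (intro inner_graph_vec_graph_pauli[OF edges_below_edge_list kernel_vec_carrier c])
      (simp add: codespace_def)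
  ultimately have "?ip u = - ?ip u"
    using m(2) by simp
  then show ?thesis
    by simp
qed

lemma codespace_subset_range_graph_encoder:
  "codespace n (gen_group n (set stabilizer_gens)) \<subseteq> {graph_encoder n k G \<Gamma> *\<^sub>v w | w. w \<in> carrier_vec (2 ^ k)}"
proof
  let ?EG = "graph_encoder n k G \<Gamma>"
  let ?ip = "\<lambda>c v. \<Sum>i<2 ^ n. cnj (graph_vec n (edge_list n G) c $ i) * v $ i"
  fix u assume u: "u \<in> codespace n (gen_group n (set stabilizer_gens))"
  then have u_carrier: "u \<in> carrier_vec (2 ^ n)"
    by (simp add: codespace_def)
  define w where "w = vec (2 ^ k) (\<lambda>x. ?ip (row_comb k \<Gamma> x) u)"
  have w: "w \<in> carrier_vec (2 ^ k)"
    by (simp add: w_def)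
  have ip_eq: "?ip c (?EG *\<^sub>v w) = ?ip c u" if c: "c \<in> carrier_vec n" for c
  proof (cases "\<exists>x<2 ^ k. c = row_comb k \<Gamma> x")
    case True
    then obtain x where x: "x < 2 ^ k" "c = row_comb k \<Gamma> x"
      by blast
    then have "(\<Sum>x'<2 ^ k. if c = row_comb k \<Gamma> x' then w $ x' else 0) = (\<Sum>x'<2 ^ k. if x' = x then w $ x' else 0)"
      using row_comb_inj[OF x(1)] by (intro sum.cong refl) auto
    also have "\<dots> = w $ x"
      using x by (simp add: sum.delta')
    finally show ?thesis
      using inner_graph_vec_graph_encoder[OF carrier c w] x by (simp add: w_def)
  next
    case False
    then have "(\<Sum>x<2 ^ k. if c = row_comb k \<Gamma> x then w $ x else 0) = 0"
      by (intro sum.neutral) auto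
    then show ?thesis
      using inner_graph_vec_graph_encoder[OF carrier c w] codespace_inner_graph_vec_eq_0[OF u c] False by auto
  qed
  have "?EG *\<^sub>v w = u"
    using u_carrier w graph_encoder_carrier[OF carrier, where G = G] ip_eq[OF bits_vec_carrier]
    by (intro eq_if_inner_graph_vecs_eq[where E = "edge_list n G"]) auto
  then show "u \<in> {?EG *\<^sub>v w | w. w \<in> carrier_vec (2 ^ k)}"
    using w by auto
qed

lemma graph_encoder_stabilizer_encoder: "stabilizer_encoder n k (graph_encoder n k G \<Gamma>)"
  unfolding stabilizer_encoder_def
  using graph_encoder_carrier[OF carrier] graph_encoder_isometry stabilizer_group_code
    range_graph_encoder_subset_codespace codespace_subset_range_graph_encoder
  by (intro conjI exI[of _ 1] exI[of _ "gen_group n (set stabilizer_gens)"]) auto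

end

theorem proposition2:
  fixes n k :: nat and G \<Gamma> :: "bit mat" and C :: "complex mat" and U :: "nat \<Rightarrow> complex mat"
  assumes "1 \<le> k" and "k < n"
    and "simple_graph_adj n G"
    and "\<Gamma> \<in> carrier_mat k n"
    and "clifford k C"
    and "\<forall>j<n. clifford 1 (U j)"
  shows "stabilizer_encoder n k (tensor_ops n U * graph_encoder n k G \<Gamma> * C)
         \<longleftrightarrow> vec_space.rank k \<Gamma> = k"
proof -
  \<comment> \<open>\<open>graph_state\<close> reads only the upper triangle of \<open>G\<close>.\<close>
  have L: "unitary_mat (2 ^ n) (tensor_ops n U)"
    using assms(6) by (intro tensor_ops_unitary) (simp add: clifford_def)
  have C: "unitary_mat (2 ^ k) C"
    using assms(5) by (simp add: clifford_def)
  show ?thesis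
  proof
    assume "stabilizer_encoder n k (tensor_ops n U * graph_encoder n k G \<Gamma> * C)"
    then obtain c where "mat_adjoint (tensor_ops n U * graph_encoder n k G \<Gamma> * C)
        * (tensor_ops n U * graph_encoder n k G \<Gamma> * C) = c \<cdot>\<^sub>m 1\<^sub>m (2 ^ k)"
      unfolding stabilizer_encoder_def by blast
    then have "mat_adjoint (graph_encoder n k G \<Gamma>) * graph_encoder n k G \<Gamma> = c \<cdot>\<^sub>m 1\<^sub>m (2 ^ k)"
      using scalar_isometry_unitary_sandwich_iff[OF L graph_encoder_carrier[OF assms(4)] C] by simp
    then show "vec_space.rank k \<Gamma> = k"
      by (rule graph_encoder_scalar_isometry_imp_full_rank[OF assms(4)])
  next
    assume "vec_space.rank k \<Gamma> = k"
    then obtain piv Binv where "pivot_cols \<Gamma> k n piv Binv"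
      using full_rank_imp_pivot_cols[OF assms(4)] by blast
    then interpret graph_code \<Gamma> k n piv Binv G
      by (simp add: graph_code_def)
    show "stabilizer_encoder n k (tensor_ops n U * graph_encoder n k G \<Gamma> * C)"
      using graph_encoder_stabilizer_encoder L local_clifford_conj_pauli[OF assms(6)] C
      by (rule stabilizer_encoder_unitary_sandwich)
  qed
qed

end
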